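(* Let $n\ge1$. The dg algebra $(\mathcal{D}_{\mathbb{C}^{1|1}},[x^n\partial_\xi,\cdot])$ is quasi-isomorphic to the matrix algebra $gl_n(\mathbb{C})$ (concentrated in degree $0$ with zero differential).
   Context: $\mathcal{D}_{\mathbb{C}^{1|1}}$ is the algebra of differential operators on the polynomial superalgebra $\mathbb{C}[x,\xi]$ with $x$ even of degree $0$ and $\xi$ odd of cohomological degree $-1$, i.e. the super Weyl algebra generated by $x,\partial_x,\xi,\partial_\xi$ with $\deg\partial_\xi=1$. The element $x^n\partial_\xi$ is the differential of the Koszul resolution $K(\mathbb{C}[x],x^n)=\mathbb{C}[x,\xi]$ of $\mathbb{C}[x]/(x^n)$, and the differential on $\mathcal{D}_{\mathbb{C}^{1|1}}$ is the supercommutator with it. *)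

theory Defs
  imports "HOL-Computational_Algebra.Polynomial" "Jordan_Normal_Form.Matrix"
begin

text \<open>The grading is
  cohomological: dg_hom A k is the subspace of homogeneous elements of degree k,
  and the differential dg_d raises the degree by one.\<close>

record 'a dga =
  dg_car   :: "'a set"
  dg_zero  :: 'a
  dg_one   :: 'a
  dg_add   :: "'a \<Rightarrow> 'a \<Rightarrow> 'a"
  dg_smult :: "complex \<Rightarrow> 'a \<Rightarrow> 'a"
  dg_mult  :: "'a \<Rightarrow> 'a \<Rightarrow> 'a"
  dg_hom   :: "int \<Rightarrow> 'a set"
  dg_d     :: "'a \<Rightarrow> 'a"

definition dg_sum :: "'a dga \<Rightarrow> (int \<Rightarrow> 'a) \<Rightarrow> 'a" where
  "dg_sum A f = foldr (\<lambda>k s. dg_add A (f k) s)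
      (sorted_list_of_set {k. f k \<noteq> dg_zero A}) (dg_zero A)"

definition is_dga :: "'a dga \<Rightarrow> bool" where
  "is_dga A \<longleftrightarrow>
    \<comment> \<open>complex vector space\<close>
    dg_zero A \<in> dg_car A
  \<and> (\<forall>a\<in>dg_car A. \<forall>b\<in>dg_car A. dg_add A a b \<in> dg_car A)
  \<and> (\<forall>c. \<forall>a\<in>dg_car A. dg_smult A c a \<in> dg_car A)
  \<and> (\<forall>a\<in>dg_car A. \<forall>b\<in>dg_car A. \<forall>c\<in>dg_car A.
        dg_add A (dg_add A a b) c = dg_add A a (dg_add A b c))
  \<and> (\<forall>a\<in>dg_car A. \<forall>b\<in>dg_car A. dg_add A a b = dg_add A b a)
  \<and> (\<forall>a\<in>dg_car A. dg_add A a (dg_zero A) = a)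
  \<and> (\<forall>a\<in>dg_car A. dg_add A a (dg_smult A (-1) a) = dg_zero A)
  \<and> (\<forall>a\<in>dg_car A. dg_smult A 1 a = a)
  \<and> (\<forall>c e. \<forall>a\<in>dg_car A. dg_smult A (c * e) a = dg_smult A c (dg_smult A e a))
  \<and> (\<forall>c e. \<forall>a\<in>dg_car A. dg_smult A (c + e) a = dg_add A (dg_smult A c a) (dg_smult A e a))
  \<and> (\<forall>c. \<forall>a\<in>dg_car A. \<forall>b\<in>dg_car A.
        dg_smult A c (dg_add A a b) = dg_add A (dg_smult A c a) (dg_smult A c b))
    \<comment> \<open>associative unital algebra, bilinear multiplication\<close>
  \<and> dg_one A \<in> dg_car A
  \<and> (\<forall>a\<in>dg_car A. \<forall>b\<in>dg_car A. dg_mult A a b \<in> dg_car A)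
  \<and> (\<forall>a\<in>dg_car A. \<forall>b\<in>dg_car A. \<forall>c\<in>dg_car A.
        dg_mult A (dg_mult A a b) c = dg_mult A a (dg_mult A b c))
  \<and> (\<forall>a\<in>dg_car A. dg_mult A (dg_one A) a = a \<and> dg_mult A a (dg_one A) = a)
  \<and> (\<forall>a\<in>dg_car A. \<forall>b\<in>dg_car A. \<forall>c\<in>dg_car A.
        dg_mult A a (dg_add A b c) = dg_add A (dg_mult A a b) (dg_mult A a c)
      \<and> dg_mult A (dg_add A a b) c = dg_add A (dg_mult A a c) (dg_mult A b c))
  \<and> (\<forall>e. \<forall>a\<in>dg_car A. \<forall>b\<in>dg_car A.
        dg_mult A (dg_smult A e a) b = dg_smult A e (dg_mult A a b)
      \<and> dg_mult A a (dg_smult A e b) = dg_smult A e (dg_mult A a b))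
    \<comment> \<open>Z-grading: A is the internal direct sum of the subspaces dg_hom A k\<close>
  \<and> (\<forall>k. dg_hom A k \<subseteq> dg_car A \<and> dg_zero A \<in> dg_hom A k
        \<and> (\<forall>a\<in>dg_hom A k. \<forall>b\<in>dg_hom A k. dg_add A a b \<in> dg_hom A k)
        \<and> (\<forall>c. \<forall>a\<in>dg_hom A k. dg_smult A c a \<in> dg_hom A k))
  \<and> (\<forall>a\<in>dg_car A. \<exists>!f. (\<forall>k. f k \<in> dg_hom A k)
        \<and> finite {k. f k \<noteq> dg_zero A} \<and> a = dg_sum A f)
  \<and> (\<forall>k l. \<forall>a\<in>dg_hom A k. \<forall>b\<in>dg_hom A l. dg_mult A a b \<in> dg_hom A (k + l))
  \<and> dg_one A \<in> dg_hom A 0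
    \<comment> \<open>differential of degree +1, square zero, graded Leibniz rule\<close>
  \<and> (\<forall>k. \<forall>a\<in>dg_hom A k. dg_d A a \<in> dg_hom A (k + 1))
  \<and> (\<forall>a\<in>dg_car A. dg_d A a \<in> dg_car A)
  \<and> (\<forall>a\<in>dg_car A. \<forall>b\<in>dg_car A. dg_d A (dg_add A a b) = dg_add A (dg_d A a) (dg_d A b))
  \<and> (\<forall>c. \<forall>a\<in>dg_car A. dg_d A (dg_smult A c a) = dg_smult A c (dg_d A a))
  \<and> (\<forall>a\<in>dg_car A. dg_d A (dg_d A a) = dg_zero A)
  \<and> (\<forall>k. \<forall>a\<in>dg_hom A k. \<forall>b\<in>dg_car A.
        dg_d A (dg_mult A a b) =
          dg_add A (dg_mult A (dg_d A a) b)
                   (dg_smult A ((-1) ^ nat \<bar>k\<bar>) (dg_mult A a (dg_d A b))))"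

definition dga_hom :: "('a \<Rightarrow> 'b) \<Rightarrow> 'a dga \<Rightarrow> 'b dga \<Rightarrow> bool" where
  "dga_hom f A B \<longleftrightarrow>
     (\<forall>a\<in>dg_car A. f a \<in> dg_car B)
   \<and> (\<forall>a\<in>dg_car A. \<forall>b\<in>dg_car A. f (dg_add A a b) = dg_add B (f a) (f b))
   \<and> (\<forall>c. \<forall>a\<in>dg_car A. f (dg_smult A c a) = dg_smult B c (f a))
   \<and> (\<forall>a\<in>dg_car A. \<forall>b\<in>dg_car A. f (dg_mult A a b) = dg_mult B (f a) (f b))
   \<and> f (dg_one A) = dg_one B
   \<and> (\<forall>k. \<forall>a\<in>dg_hom A k. f a \<in> dg_hom B k)
   \<and> (\<forall>a\<in>dg_car A. f (dg_d A a) = dg_d B (f a))"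

definition dg_cocycles :: "'a dga \<Rightarrow> int \<Rightarrow> 'a set" where
  "dg_cocycles A k = {a \<in> dg_hom A k. dg_d A a = dg_zero A}"

definition dg_coboundaries :: "'a dga \<Rightarrow> int \<Rightarrow> 'a set" where
  "dg_coboundaries A k = dg_d A ` dg_hom A (k - 1)"

text \<open>A quasi-isomorphism: a dg algebra morphism inducing a bijection
  H^k(A) \<rightarrow> H^k(B) for every k (injectivity and surjectivity of the induced map
  on cohomology written out).\<close>
definition dga_qiso :: "('a \<Rightarrow> 'b) \<Rightarrow> 'a dga \<Rightarrow> 'b dga \<Rightarrow> bool" where
  "dga_qiso f A B \<longleftrightarrow> is_dga A \<and> is_dga B \<and> dga_hom f A B
   \<and> (\<forall>k. \<forall>z\<in>dg_cocycles A k. f z \<in> dg_coboundaries B k \<longrightarrow> z \<in> dg_coboundaries A k)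
   \<and> (\<forall>k. \<forall>w\<in>dg_cocycles B k. \<exists>z\<in>dg_cocycles A k. \<exists>b\<in>dg_hom B (k - 1).
          w = dg_add B (f z) (dg_d B b))"

definition qiso_step :: "'c dga \<Rightarrow> 'c dga \<Rightarrow> bool" where
  "qiso_step C C' \<longleftrightarrow> (\<exists>f. dga_qiso f C C') \<or> (\<exists>g. dga_qiso g C' C)"

text \<open>Quasi-isomorphic dg algebras: connected by a finite zigzag of
  quasi-isomorphisms, the intermediate dg algebras having elements in the
  universe type 'c.\<close>
definition quasi_isomorphic_in :: "'c itself \<Rightarrow> 'a dga \<Rightarrow> 'b dga \<Rightarrow> bool" where
  "quasi_isomorphic_in U A B \<longleftrightarrow>
     (\<exists>(A'::'c dga) (B'::'c dga).
        ((\<exists>f. dga_qiso f A A') \<or> (\<exists>g. dga_qiso g A' A))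
      \<and> ((\<exists>f. dga_qiso f B B') \<or> (\<exists>g. dga_qiso g B' B))
      \<and> qiso_step\<^sup>*\<^sup>* A' B')"

text \<open>C[x,xi] = C[x] \<oplus> C[x] xi; the pair (p,q) stands for p + q xi.
  Cohomological degrees: C[x] sits in degree 0, C[x] xi in degree -1.\<close>
type_synonym sv = "complex poly \<times> complex poly"
type_synonym sop = "sv \<Rightarrow> sv"

definition sv_deg :: "int \<Rightarrow> sv set" where
  "sv_deg j = (if j = 0 then {(p, 0) | p. True}
               else if j = -1 then {(0, q) | q. True} else {(0, 0)})"

definition op_x :: sop where "op_x = (\<lambda>(p, q). ([:0, 1:] * p, [:0, 1:] * q))"
definition op_dx :: sop where "op_dx = (\<lambda>(p, q). (pderiv p, pderiv q))"
definition op_xi :: sop where "op_xi = (\<lambda>(p, q). (0, p))"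
definition op_dxi :: sop where "op_dxi = (\<lambda>(p, q). (q, 0))"

definition op_add :: "sop \<Rightarrow> sop \<Rightarrow> sop" where
  "op_add f g = (\<lambda>v. (fst (f v) + fst (g v), snd (f v) + snd (g v)))"
definition op_smult :: "complex \<Rightarrow> sop \<Rightarrow> sop" where
  "op_smult c f = (\<lambda>v. (Polynomial.smult c (fst (f v)), Polynomial.smult c (snd (f v))))"
definition op_zero :: sop where "op_zero = (\<lambda>v. (0, 0))"

inductive_set Dops :: "sop set" where
  id_in: "id \<in> Dops"
| x_in: "op_x \<in> Dops"
| dx_in: "op_dx \<in> Dops"
| xi_in: "op_xi \<in> Dops"
| dxi_in: "op_dxi \<in> Dops"
| add_in: "f \<in> Dops \<Longrightarrow> g \<in> Dops \<Longrightarrow> op_add f g \<in> Dops"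
| smult_in: "f \<in> Dops \<Longrightarrow> op_smult c f \<in> Dops"
| comp_in: "f \<in> Dops \<Longrightarrow> g \<in> Dops \<Longrightarrow> f \<circ> g \<in> Dops"

text \<open>Parity operator (-1)^F on C[x,xi]; conjugation by it is the parity
  automorphism a \<mapsto> (-1)^{|a|} a of D.\<close>
definition op_parity :: sop where "op_parity = (\<lambda>(p, q). (p, - q))"

text \<open>Supercommutator [Q, a] = Q a - (-1)^{|a|} a Q for odd Q (extended linearly).\<close>
definition super_bracket_odd :: "sop \<Rightarrow> sop \<Rightarrow> sop" where
  "super_bracket_odd Q a = op_add (Q \<circ> a) (op_smult (-1) ((op_parity \<circ> a \<circ> op_parity) \<circ> Q))"

definition D11 :: "nat \<Rightarrow> sop dga" where
  "D11 n = \<lparr> dg_car = Dops, dg_zero = op_zero, dg_one = id,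
            dg_add = op_add, dg_smult = op_smult, dg_mult = (\<circ>),
            dg_hom = (\<lambda>k. {f \<in> Dops. \<forall>j. \<forall>v\<in>sv_deg j. f v \<in> sv_deg (j + k)}),
            dg_d = super_bracket_odd ((op_x ^^ n) \<circ> op_dxi) \<rparr>"

definition gl_dga :: "nat \<Rightarrow> complex mat dga" where
  "gl_dga n = \<lparr> dg_car = carrier_mat n n, dg_zero = 0\<^sub>m n n, dg_one = 1\<^sub>m n,
               dg_add = (+), dg_smult = (\<cdot>\<^sub>m), dg_mult = (*),
               dg_hom = (\<lambda>k. if k = 0 then carrier_mat n n else {0\<^sub>m n n}),
               dg_d = (\<lambda>_. 0\<^sub>m n n) \<rparr>"

end

theory Submission
  imports Defs "HOL-Library.Function_Algebras" "HOL-Library.Product_Plus"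
    "HOL-Computational_Algebra.Polynomial_Factorial" "HOL-Computational_Algebra.Field_as_Ring"
begin

(* A differential operator on C[x] + C[x] xi is a block matrix [[A, B], [C, D]] with entries in
   the Weyl algebra W = C[x, d/dx]; B has degree 1, A and D degree 0, C degree -1.  The
   differential is d[[A, B], [C, D]] = [[x^n C, x^n D - A x^n], [0, C x^n]].

   In degree 1 there is no cohomology: the Euler operator theta = x d/dx is diagonal on monomials,
   and a Bezout identity between two coprime polynomials in theta writes every d^m, hence every
   element of W, as x^n D - A x^n.  So the dg algebra is quasi-isomorphic to its truncation in
   degrees <= 0, whose degree 0 part consists of the pairs (A, D) with A x^n = x^n D.  Such an A preserves the
   ideal (x^n), and the induced action on C[x]/(x^n) = C^n is a dg algebra map to gl_n.  It is
   onto, since the operators x^i f(theta) d^j with f vanishing at 1, ..., n-1 realise the matrix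
   units, and its kernel consists of the A = x^n C, i.e. of the coboundaries d[[0, 0], [C, 0]]. *)

section \<open>The Weyl algebra C[x, d/dx] as operators on C[x]\<close>

type_synonym pop = "complex poly \<Rightarrow> complex poly"

definition poly_linear :: "pop \<Rightarrow> bool" where
  "poly_linear f \<longleftrightarrow> (\<forall>p q. f (p + q) = f p + f q)
     \<and> (\<forall>c p. f (Polynomial.smult c p) = Polynomial.smult c (f p))"

lemma poly_linear_0: "poly_linear f \<Longrightarrow> f 0 = 0"
  unfolding poly_linear_def by (metis add_cancel_right_right add_0)

lemma poly_linear_uminus: "poly_linear f \<Longrightarrow> f (- p) = - f p"
  unfolding poly_linear_def by (metis smult_1_left smult_minus_left)

lemma poly_linear_sum: "poly_linear f \<Longrightarrow> f (\<Sum>i\<in>S. g i) = (\<Sum>i\<in>S. f (g i))"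
  by (induction S rule: infinite_finite_induct) (auto simp: poly_linear_0 poly_linear_def)

inductive_set Weyl :: "pop set" where
  Weyl_id: "id \<in> Weyl"
| Weyl_x: "(\<lambda>p. [:0, 1:] * p) \<in> Weyl"
| Weyl_pderiv: "pderiv \<in> Weyl"
| Weyl_add: "f \<in> Weyl \<Longrightarrow> g \<in> Weyl \<Longrightarrow> (\<lambda>p. f p + g p) \<in> Weyl"
| Weyl_smult: "f \<in> Weyl \<Longrightarrow> (\<lambda>p. Polynomial.smult c (f p)) \<in> Weyl"
| Weyl_comp: "f \<in> Weyl \<Longrightarrow> g \<in> Weyl \<Longrightarrow> f \<circ> g \<in> Weyl"

lemma Weyl_zero: "(\<lambda>_. 0) \<in> Weyl"
  using Weyl_smult[OF Weyl_id, of 0] by simp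

lemma Weyl_uminus: "f \<in> Weyl \<Longrightarrow> (\<lambda>p. - f p) \<in> Weyl"
  using Weyl_smult[of f "-1"] by simp

lemma Weyl_diff: "f \<in> Weyl \<Longrightarrow> g \<in> Weyl \<Longrightarrow> (\<lambda>p. f p - g p) \<in> Weyl"
  using Weyl_add[OF _ Weyl_uminus[of g], of f] by simp

lemma Weyl_sum:
  assumes "finite S" and "\<And>s. s \<in> S \<Longrightarrow> f s \<in> Weyl"
  shows "(\<lambda>p. \<Sum>s\<in>S. Polynomial.smult (c s) (f s p)) \<in> Weyl"
  using assms
proof (induction S rule: finite_induct)
  case empty
  then show ?case using Weyl_zero by simp
next
  case (insert x S)
  then show ?case using Weyl_add[OF Weyl_smult[of "f x" "c x"] insert.IH] by simp
qed

lemma Weyl_mult: "(\<lambda>p. c * p) \<in> Weyl"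
proof (induction c rule: pCons_induct)
  case 0
  then show ?case using Weyl_zero by simp
next
  case (pCons a c)
  have "(\<lambda>p. pCons a c * p) = (\<lambda>p. Polynomial.smult a (id p) + ((\<lambda>p. [:0, 1:] * p) \<circ> (\<lambda>p. c
      * p)) p)"
    by (simp add: fun_eq_iff)
  with pCons show ?case by (metis Weyl.intros)
qed

lemma Weyl_higher_pderiv: "pderiv ^^ i \<in> Weyl"
proof (induction i)
  case 0
  then show ?case using Weyl_id by (simp add: id_def)
next
  case (Suc i)
  have "pderiv ^^ Suc i = pderiv \<circ> (pderiv ^^ i)" by simp
  then show ?case using Suc Weyl_pderiv Weyl_comp by metis
qed

lemma Weyl_poly_linear: "f \<in> Weyl \<Longrightarrow> poly_linear f"
  by (induction rule: Weyl.induct)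
     (auto simp: poly_linear_def algebra_simps pderiv_add pderiv_smult smult_add_right)

lemma Weyl_0: "f \<in> Weyl \<Longrightarrow> f 0 = 0"
  using Weyl_poly_linear poly_linear_0 by blast

definition diff_op :: "(nat \<Rightarrow> complex poly) \<Rightarrow> nat \<Rightarrow> pop" where
  "diff_op a N = (\<lambda>p. \<Sum>i<N. a i * (pderiv ^^ i) p)"

lemma diff_op_Weyl: "diff_op a N \<in> Weyl"
proof (induction N)
  case 0
  then show ?case using Weyl_zero by (simp add: diff_op_def)
next
  case (Suc N)
  have "diff_op a (Suc N) = (\<lambda>p. diff_op a N p + ((\<lambda>p. a N * p) \<circ> (pderiv ^^ N)) p)"
    by (simp add: diff_op_def fun_eq_iff)
  then show ?case using Suc Weyl_add Weyl_comp Weyl_mult Weyl_higher_pderiv by metis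
qed

lemma diff_op_pad: "N \<le> K \<Longrightarrow> diff_op a N = diff_op (\<lambda>i. if i < N then a i else 0) K"
proof (rule ext)
  fix p assume "N \<le> K"
  have "(\<Sum>i<K. (if i < N then a i else 0) * (pderiv ^^ i) p)
      = (\<Sum>i<N. (if i < N then a i else 0) * (pderiv ^^ i) p)"
    by (rule sum.mono_neutral_right) (use \<open>N \<le> K\<close> in auto)
  then show "diff_op a N p = diff_op (\<lambda>i. if i < N then a i else 0) K p" by (simp add: diff_op_def)
qed

lemma pderiv_sum: "pderiv (sum f A) = (\<Sum>x\<in>A. pderiv (f x))"
  by (induction A rule: infinite_finite_induct) (auto simp: pderiv_add)

lemma smult_sum_right: "Polynomial.smult c (sum f A) = (\<Sum>x\<in>A. Polynomial.smult c (f x))"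
  by (induction A rule: infinite_finite_induct) (auto simp: smult_add_right)

lemma mult_comp_diff_op: "(\<lambda>p. c * p) \<circ> diff_op a N = diff_op (\<lambda>i. c * a i) N"
  by (simp add: fun_eq_iff diff_op_def sum_distrib_left mult.assoc)

lemma diff_op_add: "\<exists>c K. (\<lambda>p. diff_op a N p + diff_op b M p) = diff_op c K"
proof -
  let ?K = "max N M"
  have "(\<lambda>p. diff_op a N p + diff_op b M p)
      = diff_op (\<lambda>i. (if i < N then a i else 0) + (if i < M then b i else 0)) ?K"
    by (simp add: diff_op_pad[of N ?K a] diff_op_pad[of M ?K b])
       (simp add: diff_op_def fun_eq_iff sum.distrib distrib_right)
  then show ?thesis by blast
qed

lemma pderiv_diff_op: "\<exists>b M. (\<lambda>p. pderiv (diff_op a N p)) = diff_op b M"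
proof -
  define c where "c i = (if i < N then pderiv (a i) else 0)" for i
  define e where "e i = (case i of 0 \<Rightarrow> 0 | Suc j \<Rightarrow> a j)" for i
  have "pderiv (diff_op a N p) = diff_op (\<lambda>i. c i + e i) (Suc N) p" for p
  proof -
    have "pderiv (diff_op a N p)
        = (\<Sum>i<N. pderiv (a i) * (pderiv ^^ i) p) + (\<Sum>i<N. a i * (pderiv ^^ Suc i) p)"
      by (simp add: diff_op_def pderiv_sum pderiv_mult sum.distrib algebra_simps)
    also have "(\<Sum>i<N. pderiv (a i) * (pderiv ^^ i) p) = (\<Sum>i<Suc N. c i * (pderiv ^^ i) p)"
      by (simp add: c_def)
    also have "(\<Sum>i<N. a i * (pderiv ^^ Suc i) p) = (\<Sum>i<Suc N. e i * (pderiv ^^ i) p)"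
      by (subst sum.lessThan_Suc_shift) (simp add: e_def del: funpow.simps)
    finally show ?thesis by (simp add: diff_op_def sum.distrib distrib_right)
  qed
  then show ?thesis by blast
qed

lemma Weyl_comp_diff_op: "f \<in> Weyl \<Longrightarrow> \<exists>b M. f \<circ> diff_op a N = diff_op b M"
proof (induction arbitrary: a N rule: Weyl.induct)
  case Weyl_x
  show ?case using mult_comp_diff_op by blast
next
  case Weyl_pderiv
  show ?case using pderiv_diff_op by (simp add: o_def)
next
  case (Weyl_add f g)
  obtain b M b' M' where "f \<circ> diff_op a N = diff_op b M" "g \<circ> diff_op a N = diff_op b' M'"
    using Weyl_add.IH by blast
  then have "(\<lambda>p. f p + g p) \<circ> diff_op a N = (\<lambda>p. diff_op b M p + diff_op b' M' p)"
    by (simp add: fun_eq_iff)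
  then show ?case using diff_op_add by metis
next
  case (Weyl_smult f c)
  obtain b M where b: "f \<circ> diff_op a N = diff_op b M" using Weyl_smult.IH by blast
  have "(\<lambda>p. Polynomial.smult c (f p)) \<circ> diff_op a N = diff_op (\<lambda>i. Polynomial.smult c (b i)) M"
  proof (rule ext)
    fix p
    have "f (diff_op a N p) = diff_op b M p" using b by (metis comp_apply)
    then show "((\<lambda>p. Polynomial.smult c (f p)) \<circ> diff_op a N) p = diff_op (\<lambda>i. Polynomial.smult c
        (b i)) M p"
      by (simp add: diff_op_def smult_sum_right)
  qed
  then show ?case by blast
next
  case (Weyl_comp f g)
  then show ?case by (metis comp_assoc)
qed auto

lemma Weyl_eq_diff_op:
  assumes "f \<in> Weyl"
  shows "\<exists>a N. f = diff_op a N"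
proof -
  have "diff_op (\<lambda>_. 1) 1 = id" by (simp add: diff_op_def fun_eq_iff)
  then show ?thesis using Weyl_comp_diff_op[OF assms] by (metis comp_id)
qed

lemma higher_pderiv_monom_1: "(pderiv ^^ l) (monom 1 i) = monom (\<Prod>s<l. of_nat (i - s)) (i - l)"
  by (induction l) (simp_all add: pderiv_monom mult.commute)

text \<open>Testing on the monomials x^i in increasing order isolates one coefficient at a time.\<close>

lemma dvd_diff_op_coeffs:
  fixes X :: "complex poly"
  assumes dvd: "\<And>p. X dvd diff_op a N p" and "i < N"
  shows "X dvd a i"
  using \<open>i < N\<close>
proof (induction i rule: less_induct)
  case (less i)
  define t where "t l = a l * (pderiv ^^ l) (monom 1 i)" for l
  have total: "X dvd (\<Sum>l<N. t l)" using dvd[of "monom 1 i"] by (simp add: diff_op_def t_def)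
  have rest: "X dvd (\<Sum>l\<in>{..<N} - {i}. t l)"
  proof (rule dvd_sum)
    fix l assume l: "l \<in> {..<N} - {i}"
    show "X dvd t l"
    proof (cases "l < i")
      case True
      then show ?thesis using less.IH[of l] l by (simp add: t_def)
    next
      case False
      then have zero: "(\<Prod>s<l. (of_nat (i - s) :: complex)) = 0"
        using l by (intro prod_zero) (auto intro!: bexI[of _ i])
      show ?thesis unfolding t_def higher_pderiv_monom_1 zero by simp
    qed
  qed
  have "(\<Sum>l<N. t l) = t i + (\<Sum>l\<in>{..<N} - {i}. t l)"
    using less.prems by (simp add: sum.remove)
  then have "X dvd t i" using total rest by (metis dvd_add_left_iff)
  moreover have "t i = Polynomial.smult (\<Prod>s<i. of_nat (i - s)) (a i)"
    by (simp add: t_def higher_pderiv_monom_1 monom_0 mult.commute)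
  moreover have "(\<Prod>s<i. (of_nat (i - s) :: complex)) \<noteq> 0" by (simp add: prod_zero_iff)
  ultimately show ?case by (simp add: dvd_smult_cancel)
qed

text \<open>euler_op f is f(\<theta>) for the Euler operator \<theta> = x d/dx, which acts on x^k by k.\<close>

definition euler_op :: "complex poly \<Rightarrow> pop" where
  "euler_op f p = (\<Sum>k\<le>degree p. monom (poly f (of_nat k) * coeff p k) k)"

lemma coeff_euler_op: "coeff (euler_op f p) k = poly f (of_nat k) * coeff p k"
  by (cases "k \<le> degree p") (auto simp: euler_op_def coeff_sum coeff_monom coeff_eq_0)

lemma euler_op_Weyl: "euler_op f \<in> Weyl"
proof (induction f rule: pCons_induct)
  case 0
  have "euler_op 0 = (\<lambda>_. 0)" by (intro ext poly_eqI) (simp add: coeff_euler_op)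
  then show ?case using Weyl_zero by simp
next
  case (pCons c g)
  have "euler_op (pCons c g)
      = (\<lambda>p. Polynomial.smult c (id p) + ((\<lambda>p. [:0, 1:] * p) \<circ> (pderiv \<circ> euler_op g)) p)"
  proof (intro ext poly_eqI)
    fix p k
    show "coeff (euler_op (pCons c g) p) k
        = coeff (Polynomial.smult c (id p) + ((\<lambda>p. [:0, 1:] * p) \<circ> (pderiv \<circ> euler_op g)) p) k"
      by (cases k) (simp_all add: coeff_euler_op coeff_pderiv algebra_simps)
  qed
  with pCons show ?case by (metis Weyl.intros)
qed

section \<open>Every element of the Weyl algebra is of the form x^n D - A x^n\<close>

definition falling_poly :: "nat \<Rightarrow> complex poly" where
  "falling_poly n = (\<Prod>i<n. [:of_int (1 - int n + int i), 1:])"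

definition rising_poly :: "nat \<Rightarrow> nat \<Rightarrow> complex poly" where
  "rising_poly n m = (\<Prod>i<n. [:of_int (int m + 1 + int i), 1:])"

lemma poly_falling_poly: "poly (falling_poly n) x = pochhammer (x - of_nat n + 1) n"
  by (simp add: falling_poly_def poly_prod pochhammer_prod atLeast0LessThan algebra_simps)

lemma poly_rising_poly: "poly (rising_poly n m) x = pochhammer (x + of_nat m + 1) n"
  by (simp add: rising_poly_def poly_prod pochhammer_prod atLeast0LessThan algebra_simps)

lemma poly_falling_poly_below: "k < n \<Longrightarrow> poly (falling_poly n) (of_nat k) = 0"
  by (auto simp: poly_falling_poly pochhammer_eq_0_iff of_nat_diff intro!: exI[of _ "n - 1 - k"])

lemma coprime_linear_poly: "a \<noteq> b \<Longrightarrow> coprime [:a, 1:] [:b, 1 :: complex:]"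
proof (rule coprimeI)
  fix c assume ab: "a \<noteq> b" and c: "c dvd [:a, 1:]" "c dvd [:b, 1:]"
  then have "c dvd [:a - b:]" using dvd_diff[OF c] by simp
  moreover have "is_unit [:a - b:]" using ab by (intro is_unit_triv) simp
  ultimately show "is_unit c" using dvd_unit_imp_unit by blast
qed

lemma coprime_falling_rising: "coprime (falling_poly n) (rising_poly n m)"
  unfolding falling_poly_def rising_poly_def
proof (intro prod_coprime_left prod_coprime_right coprime_linear_poly)
  fix i j assume "i \<in> {..<n}"
  then have "(of_nat i :: complex) \<noteq> of_nat (m + j + n)" by (simp only: of_nat_eq_iff) simp
  then show "(of_int (1 - int n + int i) :: complex) \<noteq> of_int (int m + 1 + int j)"
    by (simp add: diff_eq_eq ac_simps)
qed

lemma coeff_euler_higher_pderiv: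
  "coeff (euler_op f ((pderiv ^^ m) p)) k = poly f (of_nat k) * pochhammer (of_nat (Suc k)) m
      * coeff p (k + m)"
  by (simp add: coeff_euler_op coeff_higher_pderiv)

lemma coeff_coboundary_left:
  "coeff (monom 1 n * euler_op (G \<circ>\<^sub>p [:of_nat n, 1:]) ((pderiv ^^ (n + m)) q)) k
     = poly G (of_nat k) * poly (falling_poly n) (of_nat k) * pochhammer (of_nat (Suc k)) m
         * coeff q (k + m)"
proof (cases "k < n")
  case False
  then have "pochhammer (of_nat (Suc (k - n)) :: complex) (n + m)
      = poly (falling_poly n) (of_nat k) * pochhammer (of_nat (Suc k)) m"
    by (simp only: pochhammer_product') (simp add: poly_falling_poly of_nat_diff algebra_simps)
  with False show ?thesis
    by (simp add: coeff_monom_mult coeff_euler_higher_pderiv poly_pcompose of_nat_diff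
        algebra_simps)
qed (simp add: coeff_monom_mult poly_falling_poly_below)

lemma coeff_coboundary_right:
  "coeff (euler_op H ((pderiv ^^ (n + m)) (monom 1 n * q))) k
     = poly H (of_nat k) * poly (rising_poly n m) (of_nat k) * pochhammer (of_nat (Suc k)) m
         * coeff q (k + m)"
proof -
  have "pochhammer (of_nat (Suc k) :: complex) (n + m)
      = pochhammer (of_nat (Suc k)) m * poly (rising_poly n m) (of_nat k)"
    by (simp add: poly_rising_poly pochhammer_product' add.commute[of n m] algebra_simps)
  moreover have "coeff (monom 1 n * q) (k + (n + m)) = coeff q (k + m)"
    by (simp add: coeff_monom_mult)
  ultimately show ?thesis by (simp only: coeff_euler_higher_pderiv) (simp add: algebra_simps)
qed

text \<open>In the k-th coefficient, d^(n+m) x^n and x^n d^(n+m) are d^m multiplied by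
  Q(k) = (k+m+1)...(k+m+n) and P(k) = (k-n+1)...k respectively; as P and Q are coprime, a Bezout
  identity G P + H Q = 1 gives d^m = x^n G(\<theta>+n) d^(n+m) + H(\<theta>) d^(n+m) x^n.\<close>

lemma higher_pderiv_coboundary:
  "\<exists>A D. A \<in> Weyl \<and> D \<in> Weyl \<and> (\<forall>q. (pderiv ^^ m) q = monom 1 n * D q - A (monom 1 n * q))"
proof -
  obtain G H where GH: "bezout_coefficients (falling_poly n) (rising_poly n m) = (G, H)"
    by fastforce
  have bezout: "G * falling_poly n + H * rising_poly n m = 1"
    using bezout_coefficients[OF GH] coprime_imp_gcd_eq_1[OF coprime_falling_rising] by simp
  define D where "D = euler_op (G \<circ>\<^sub>p [:of_nat n, 1:]) \<circ> (pderiv ^^ (n + m))"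
  define A where "A = (\<lambda>p. - euler_op H ((pderiv ^^ (n + m)) p))"
  have "D \<in> Weyl" unfolding D_def by (intro Weyl_comp euler_op_Weyl Weyl_higher_pderiv)
  moreover have "A \<in> Weyl"
    using Weyl_uminus[OF Weyl_comp[OF euler_op_Weyl Weyl_higher_pderiv]] by (simp add: A_def o_def)
  moreover have "(pderiv ^^ m) q = monom 1 n * D q - A (monom 1 n * q)" for q
  proof (rule poly_eqI)
    fix k
    have "poly (G * falling_poly n + H * rising_poly n m) (of_nat k) = 1" using bezout by simp
    then have unit: "poly G (of_nat k) * poly (falling_poly n) (of_nat k)
        + poly H (of_nat k) * poly (rising_poly n m) (of_nat k) = 1" by simp
    have left: "coeff (monom 1 n * D q) k = poly G (of_nat k) * poly (falling_poly n) (of_nat k)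
        * pochhammer (of_nat (Suc k)) m * coeff q (k + m)"
      unfolding D_def comp_apply by (rule coeff_coboundary_left)
    have right: "coeff (A (monom 1 n * q)) k = - (poly H (of_nat k) * poly (rising_poly n m)
        (of_nat k)
        * pochhammer (of_nat (Suc k)) m * coeff q (k + m))"
      unfolding A_def coeff_minus coeff_coboundary_right ..
    have "coeff (monom 1 n * D q - A (monom 1 n * q)) k
        = (poly G (of_nat k) * poly (falling_poly n) (of_nat k) + poly H (of_nat k) * poly
            (rising_poly n m) (of_nat k))
          * (pochhammer (of_nat (Suc k)) m * coeff q (k + m))"
      unfolding coeff_diff left right by (simp add: algebra_simps)
    then show "coeff ((pderiv ^^ m) q) k = coeff (monom 1 n * D q - A (monom 1 n * q)) k"
      by (simp add: unit coeff_higher_pderiv)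
  qed
  ultimately show ?thesis by blast
qed

lemma Weyl_coboundary:
  assumes "w \<in> Weyl"
  shows "\<exists>A D. A \<in> Weyl \<and> D \<in> Weyl \<and> (\<forall>q. w q = monom 1 n * D q - A (monom 1 n * q))"
proof -
  obtain b N where w: "w = diff_op b N" using Weyl_eq_diff_op[OF assms] by blast
  have "\<exists>A D. A \<in> Weyl \<and> D \<in> Weyl \<and> (\<forall>q. diff_op b N q = monom 1 n * D q - A (monom 1 n * q))"
  proof (induction N)
    case 0
    show ?case by (intro exI[of _ "\<lambda>_. 0"] conjI) (auto simp: diff_op_def Weyl_zero)
  next
    case (Suc N)
    obtain A1 D1 where 1: "A1 \<in> Weyl" "D1 \<in> Weyl" "\<And>q. diff_op b N q = monom 1 n * D1 q - A1
        (monom 1 n * q)"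
      using Suc by blast
    obtain A2 D2 where 2: "A2 \<in> Weyl" "D2 \<in> Weyl" "\<And>q. (pderiv ^^ N) q = monom 1 n * D2 q - A2
        (monom 1 n * q)"
      using higher_pderiv_coboundary by blast
    define A where "A = (\<lambda>p. A1 p + ((\<lambda>p. b N * p) \<circ> A2) p)"
    define D where "D = (\<lambda>p. D1 p + ((\<lambda>p. b N * p) \<circ> D2) p)"
    have "A \<in> Weyl" unfolding A_def by (rule Weyl_add[OF 1(1) Weyl_comp[OF Weyl_mult 2(1)]])
    moreover have "D \<in> Weyl" unfolding D_def
      by (rule Weyl_add[OF 1(2) Weyl_comp[OF Weyl_mult 2(2)]])
    moreover have "diff_op b (Suc N) q = monom 1 n * D q - A (monom 1 n * q)" for q
    proof -
      have "diff_op b (Suc N) q = diff_op b N q + b N * (pderiv ^^ N) q" by (simp add: diff_op_def)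
      also have "\<dots> = monom 1 n * D q - A (monom 1 n * q)"
        unfolding 1(3) 2(3) A_def D_def by (simp add: algebra_simps)
      finally show ?thesis .
    qed
    ultimately show ?case by blast
  qed
  then show ?thesis using w by simp
qed

section \<open>Operators preserving the ideal (x^n)\<close>

lemma Weyl_dvd_factor:
  assumes "f \<in> Weyl" and dvd: "\<And>p. X dvd f p"
  shows "\<exists>g\<in>Weyl. \<forall>p. f p = X * g p"
proof -
  obtain a N where f: "f = diff_op a N" using Weyl_eq_diff_op[OF assms(1)] by blast
  have dvd_a: "X dvd a i" if "i < N" for i using dvd_diff_op_coeffs[of X a N i] dvd that
    by (simp add: f)
  have "f p = X * diff_op (\<lambda>i. a i div X) N p" for p
  proof -
    have "X * diff_op (\<lambda>i. a i div X) N p = (\<Sum>i<N. (X * (a i div X)) * (pderiv ^^ i) p)"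
      by (simp add: diff_op_def sum_distrib_left mult.assoc)
    also have "\<dots> = f p"
      unfolding f diff_op_def by (rule sum.cong) (auto simp: dvd_a dvd_mult_div_cancel)
    finally show ?thesis by simp
  qed
  then show ?thesis using diff_op_Weyl by blast
qed

lemma Weyl_ideal_factor:
  assumes "A \<in> Weyl" and "\<And>q. monom 1 n dvd A (monom 1 n * q)"
  shows "\<exists>D\<in>Weyl. \<forall>q. A (monom 1 n * q) = monom 1 n * D q"
  using Weyl_dvd_factor[of "A \<circ> (\<lambda>q. monom 1 n * q)"] assms Weyl_comp Weyl_mult by auto

lemma coeff_ideal_preserving:
  assumes lin: "poly_linear A" and pres: "\<And>q. monom 1 n dvd A (monom 1 n * q)" and "i < n"
  shows "coeff (A r) i = (\<Sum>l<n. coeff (A (monom 1 l)) i * coeff r l)"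
proof -
  define t where "t = (\<Sum>l<n. monom (coeff r l) l)"
  have "monom 1 n dvd r - t"
    unfolding monom_1_dvd_iff' by (simp add: t_def coeff_sum coeff_monom)
  then obtain s where "r - t = monom 1 n * s" by (elim dvdE)
  then have r: "r = t + monom 1 n * s" by (simp add: algebra_simps)
  have A_monom: "A (monom c l) = Polynomial.smult c (A (monom 1 l))" for c l
    using lin unfolding poly_linear_def by (metis smult_monom mult.right_neutral)
  have "coeff (A (monom 1 n * s)) i = 0"
    using pres[of s] \<open>i < n\<close> unfolding monom_1_dvd_iff' by blast
  then have "coeff (A r) i = coeff (A t) i"
    using lin by (simp add: r poly_linear_def)
  also have "A t = (\<Sum>l<n. Polynomial.smult (coeff r l) (A (monom 1 l)))"
    unfolding t_def poly_linear_sum[OF lin] by (rule sum.cong[OF refl], rule A_monom)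
  also have "coeff \<dots> i = (\<Sum>l<n. coeff (A (monom 1 l)) i * coeff r l)"
    by (simp add: coeff_sum mult.commute)
  finally show ?thesis .
qed

text \<open>f(\<theta>) with f vanishing exactly at 1, ..., n-1 (among 0, ..., n-1): composed with d^j and x^i
  it sends x^j to a nonzero multiple of x^i, kills the other x^c with c < n, and preserves (x^n).\<close>

definition vanishing_poly :: "nat \<Rightarrow> complex poly" where
  "vanishing_poly n = (\<Prod>l\<in>{1..<n}. [:- of_nat l, 1:])"

definition unit_op :: "nat \<Rightarrow> nat \<Rightarrow> nat \<Rightarrow> pop" where
  "unit_op n i j p = monom 1 i * euler_op (vanishing_poly n) ((pderiv ^^ j) p)"

lemma poly_vanishing_poly_eq_0: "1 \<le> k \<Longrightarrow> k < n \<Longrightarrow> poly (vanishing_poly n) (of_nat k) = 0"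
  by (auto simp: vanishing_poly_def poly_prod intro!: prod_zero bexI[of _ k])

lemma poly_vanishing_poly_0: "poly (vanishing_poly n) 0 \<noteq> 0"
  by (simp add: vanishing_poly_def poly_prod prod_zero_iff)

lemma unit_op_Weyl: "unit_op n i j \<in> Weyl"
proof -
  have "unit_op n i j = (\<lambda>p. monom 1 i * p) \<circ> euler_op (vanishing_poly n) \<circ> (pderiv ^^ j)"
    by (simp add: unit_op_def fun_eq_iff)
  then show ?thesis by (metis Weyl_comp Weyl_mult euler_op_Weyl Weyl_higher_pderiv)
qed

lemma coeff_unit_op:
  "coeff (unit_op n i j p) k = (if k < i then 0
     else poly (vanishing_poly n) (of_nat (k - i)) * pochhammer (of_nat (Suc (k - i))) j * coeff p
         (k - i + j))"
  by (simp add: unit_op_def coeff_monom_mult coeff_euler_higher_pderiv)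

lemma unit_op_ideal:
  assumes "j < n"
  shows "monom 1 n dvd unit_op n i j (monom 1 n * q)"
  unfolding monom_1_dvd_iff'
proof (intro allI impI)
  fix k assume "k < n"
  show "coeff (unit_op n i j (monom 1 n * q)) k = 0"
  proof (cases "k < i \<or> k - i + j < n")
    case True
    then show ?thesis by (auto simp: coeff_unit_op coeff_monom_mult)
  next
    case False
    then have "1 \<le> k - i" "k - i < n" using assms \<open>k < n\<close> by auto
    then have "poly (vanishing_poly n) (of_nat (k - i)) = 0" by (rule poly_vanishing_poly_eq_0)
    with False show ?thesis by (simp add: coeff_unit_op del: of_nat_diff)
  qed
qed

lemma coeff_unit_op_monom:
  assumes "k < n"
  shows "coeff (unit_op n i j (monom 1 c)) k
    = (if k = i \<and> c = j then poly (vanishing_poly n) 0 * fact j else 0)"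
proof -
  consider "k < i" | "k = i" | "i < k" by linarith
  then show ?thesis
  proof cases
    case 3
    then have "1 \<le> k - i" "k - i < n" using assms by auto
    then have "poly (vanishing_poly n) (of_nat (k - i)) = 0" by (rule poly_vanishing_poly_eq_0)
    with 3 show ?thesis by (simp add: coeff_unit_op del: of_nat_diff)
  qed (auto simp: coeff_unit_op coeff_monom pochhammer_fact)
qed

section \<open>Block decomposition of differential operators on C[x, \<xi>]\<close>

abbreviation pzero :: pop where "pzero \<equiv> (\<lambda>_. 0)"

definition sv_smult :: "complex \<Rightarrow> sv \<Rightarrow> sv" where
  "sv_smult c v = (Polynomial.smult c (fst v), Polynomial.smult c (snd v))"

lemma sv_smult_minus_1: "sv_smult (-1) v = - v"
  by (simp add: sv_smult_def prod_eq_iff)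

definition sv_linear :: "sop \<Rightarrow> bool" where
  "sv_linear a \<longleftrightarrow> (\<forall>u v. a (u + v) = a u + a v) \<and> (\<forall>c u. a (sv_smult c u) = sv_smult c (a u))"

text \<open>block A B C D is the operator p + q \<xi> \<mapsto> (A p + B q) + (C p + D q) \<xi>; in cohomological
  degrees, A and D have degree 0, B degree 1 and C degree -1.\<close>

definition block :: "pop \<Rightarrow> pop \<Rightarrow> pop \<Rightarrow> pop \<Rightarrow> sop" where
  "block A B C D = (\<lambda>(p, q). (A p + B q, C p + D q))"

definition blockA :: "sop \<Rightarrow> pop" where "blockA a p = fst (a (p, 0))"
definition blockB :: "sop \<Rightarrow> pop" where "blockB a q = fst (a (0, q))"
definition blockC :: "sop \<Rightarrow> pop" where "blockC a p = snd (a (p, 0))"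
definition blockD :: "sop \<Rightarrow> pop" where "blockD a q = snd (a (0, q))"

lemma block_apply [simp]: "block A B C D (p, q) = (A p + B q, C p + D q)"
  by (simp add: block_def)

lemma op_add_eq: "op_add f g = f + g"
  by (auto simp: op_add_def fun_eq_iff prod_eq_iff)

lemma op_zero_eq: "op_zero = 0"
  by (auto simp: op_zero_def fun_eq_iff zero_prod_def)

lemma op_smult_eq: "op_smult c f = (\<lambda>v. sv_smult c (f v))"
  by (auto simp: op_smult_def sv_smult_def)

lemma sv_linear_block:
  "poly_linear A \<Longrightarrow> poly_linear B \<Longrightarrow> poly_linear C \<Longrightarrow> poly_linear D \<Longrightarrow> sv_linear (block A B C D)"
  unfolding sv_linear_def poly_linear_def sv_smult_def by (auto simp: block_def smult_add_right)

lemma sv_linear_eq_block: "sv_linear a \<Longrightarrow> a = block (blockA a) (blockB a) (blockC a) (blockD a)"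
proof
  fix v assume "sv_linear a"
  obtain p q :: "complex poly" where v: "v = (p, q)" by fastforce
  have "v = (p, 0) + (0, q)" by (simp add: v)
  then have "a v = a (p, 0) + a (0, q)" using \<open>sv_linear a\<close> unfolding sv_linear_def by metis
  then show "a v = block (blockA a) (blockB a) (blockC a) (blockD a) v"
    by (simp add: v blockA_def blockB_def blockC_def blockD_def prod_eq_iff)
qed

lemma block_entries [simp]:
  "blockA (block A B C D) = (\<lambda>p. A p + B 0)" "blockB (block A B C D) = (\<lambda>q. A 0 + B q)"
  "blockC (block A B C D) = (\<lambda>p. C p + D 0)" "blockD (block A B C D) = (\<lambda>q. C 0 + D q)"
  by (auto simp: blockA_def blockB_def blockC_def blockD_def fun_eq_iff)

lemma block_add: "op_add (block A B C D) (block A' B' C' D') =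
   block (\<lambda>p. A p + A' p) (\<lambda>p. B p + B' p) (\<lambda>p. C p + C' p) (\<lambda>p. D p + D' p)"
  by (auto simp: fun_eq_iff op_add_def)

lemma block_smult: "op_smult c (block A B C D) =
   block (\<lambda>p. Polynomial.smult c (A p)) (\<lambda>p. Polynomial.smult c (B p))
         (\<lambda>p. Polynomial.smult c (C p)) (\<lambda>p. Polynomial.smult c (D p))"
  by (auto simp: fun_eq_iff op_smult_def smult_add_right)

lemma block_comp:
  assumes "poly_linear A" "poly_linear B" "poly_linear C" "poly_linear D"
  shows "block A B C D \<circ> block A' B' C' D' =
    block (\<lambda>p. A (A' p) + B (C' p)) (\<lambda>p. A (B' p) + B (D' p))
          (\<lambda>p. C (A' p) + D (C' p)) (\<lambda>p. C (B' p) + D (D' p))"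
  using assms by (auto simp: fun_eq_iff poly_linear_def)

lemma Weyl_block_entries:
  assumes "A \<in> Weyl" "B \<in> Weyl" "C \<in> Weyl" "D \<in> Weyl" and "a = block A B C D"
  shows "sv_linear a \<and> blockA a \<in> Weyl \<and> blockB a \<in> Weyl \<and> blockC a \<in> Weyl \<and> blockD a \<in> Weyl"
  using assms Weyl_0[of A] Weyl_0[of B] Weyl_0[of C] Weyl_0[of D]
  by (simp add: sv_linear_block Weyl_poly_linear)

lemma generator_blocks:
  "id = block id pzero pzero id"
  "op_x = block (\<lambda>p. [:0, 1:] * p) pzero pzero (\<lambda>p. [:0, 1:] * p)"
  "op_dx = block pderiv pzero pzero pderiv"
  "op_xi = block pzero pzero id pzero"
  "op_dxi = block pzero id pzero pzero"
  by (auto simp: fun_eq_iff op_x_def op_dx_def op_xi_def op_dxi_def)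

lemma Weyl_add_comp:
  assumes "u \<in> Weyl" "v \<in> Weyl" "w \<in> Weyl" "z \<in> Weyl"
  shows "(\<lambda>p. u (v p) + w (z p)) \<in> Weyl"
  using Weyl_add[OF Weyl_comp[OF assms(1,2)] Weyl_comp[OF assms(3,4)]] by (simp add: o_def)

lemma Dops_block:
  "a \<in> Dops \<Longrightarrow> sv_linear a \<and> blockA a \<in> Weyl \<and> blockB a \<in> Weyl \<and> blockC a \<in> Weyl \<and> blockD a \<in> Weyl"
proof (induction rule: Dops.induct)
  case id_in
  show ?case by
      (rule Weyl_block_entries[OF Weyl_id Weyl_zero Weyl_zero Weyl_id generator_blocks(1)])
next
  case x_in
  show ?case by (rule Weyl_block_entries[OF Weyl_x Weyl_zero Weyl_zero Weyl_x generator_blocks(2)])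
next
  case dx_in
  show ?case
    by (rule Weyl_block_entries[OF Weyl_pderiv Weyl_zero Weyl_zero Weyl_pderiv generator_blocks(3)])
next
  case xi_in
  show ?case by
      (rule Weyl_block_entries[OF Weyl_zero Weyl_zero Weyl_id Weyl_zero generator_blocks(4)])
next
  case dxi_in
  show ?case by
      (rule Weyl_block_entries[OF Weyl_zero Weyl_id Weyl_zero Weyl_zero generator_blocks(5)])
next
  case (add_in f g)
  have "op_add f g = block (\<lambda>p. blockA f p + blockA g p) (\<lambda>p. blockB f p + blockB g p)
                          (\<lambda>p. blockC f p + blockC g p) (\<lambda>p. blockD f p + blockD g p)"
    using add_in sv_linear_eq_block block_add by metis
  then show ?case by (rule Weyl_block_entries[rotated 4]) (use add_in in \<open>auto intro: Weyl_add\<close>)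
next
  case (smult_in f c)
  have "op_smult c f = block (\<lambda>p. Polynomial.smult c (blockA f p)) (\<lambda>p. Polynomial.smult c
      (blockB f p))
                             (\<lambda>p. Polynomial.smult c (blockC f p)) (\<lambda>p. Polynomial.smult c
                                 (blockD f p))"
    using smult_in sv_linear_eq_block block_smult by metis
  then show ?case by (rule Weyl_block_entries[rotated 4]) (use smult_in in \<open>auto intro: Weyl_smult\<close>)
next
  case (comp_in f g)
  have lin: "poly_linear (blockA f)" "poly_linear (blockB f)" "poly_linear (blockC f)"
      "poly_linear (blockD f)"
    using comp_in Weyl_poly_linear by auto
  have "f \<circ> g = block (\<lambda>p. blockA f (blockA g p) + blockB f (blockC g p))
                     (\<lambda>p. blockA f (blockB g p) + blockB f (blockD g p))
                     (\<lambda>p. blockC f (blockA g p) + blockD f (blockC g p))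
                     (\<lambda>p. blockC f (blockB g p) + blockD f (blockD g p))"
    using comp_in sv_linear_eq_block block_comp[OF lin] by metis
  then show ?case
    by (rule Weyl_block_entries[rotated 4]) (use comp_in in \<open>auto intro: Weyl_add_comp\<close>)
qed

lemma diag_block_Dops: "w \<in> Weyl \<Longrightarrow> block w pzero pzero pzero \<in> Dops"
proof (induction rule: Weyl.induct)
  case Weyl_id
  have "op_add id (op_smult (-1) (op_xi \<circ> op_dxi)) = block id pzero pzero pzero"
    by (auto simp: fun_eq_iff op_add_def op_smult_def op_xi_def op_dxi_def)
  then show ?case by (metis Dops.intros)
next
  case Weyl_x
  have "op_add op_x (op_smult (-1) (op_xi \<circ> op_dxi \<circ> op_x)) = block (\<lambda>p. [:0, 1:]
      * p) pzero pzero pzero"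
    by (auto simp: fun_eq_iff op_add_def op_smult_def op_xi_def op_dxi_def op_x_def)
  then show ?case by (metis Dops.intros)
next
  case Weyl_pderiv
  have "op_add op_dx (op_smult (-1) (op_xi \<circ> op_dxi \<circ> op_dx)) = block pderiv pzero pzero pzero"
    by (auto simp: fun_eq_iff op_add_def op_smult_def op_xi_def op_dxi_def op_dx_def)
  then show ?case by (metis Dops.intros)
next
  case (Weyl_add f g)
  then show ?case using Dops.add_in[OF Weyl_add.IH] by (simp add: block_add)
next
  case (Weyl_smult f c)
  then show ?case using Dops.smult_in[OF Weyl_smult.IH, of c] by (simp add: block_smult)
next
  case (Weyl_comp f g)
  have "block f pzero pzero pzero \<circ> block g pzero pzero pzero = block (f \<circ> g) pzero pzero pzero"
    using Weyl_0[OF Weyl_comp.hyps(1)] by (auto simp: fun_eq_iff)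
  then show ?case by (metis Weyl_comp.IH Dops.intros)
qed

text \<open>The remaining three entries are reached by multiplying with \<xi> and d/d\<xi>.\<close>

lemma block_Dops:
  assumes "A \<in> Weyl" "B \<in> Weyl" "C \<in> Weyl" "D \<in> Weyl"
  shows "block A B C D \<in> Dops"
proof -
  have "block B pzero pzero pzero \<circ> op_dxi = block pzero B pzero pzero"
    using Weyl_0[OF assms(2)] by (auto simp: fun_eq_iff op_dxi_def)
  then have B: "block pzero B pzero pzero \<in> Dops" by (metis diag_block_Dops assms(2) Dops.intros)
  have "op_xi \<circ> block C pzero pzero pzero = block pzero pzero C pzero"
    by (auto simp: fun_eq_iff op_xi_def)
  then have C: "block pzero pzero C pzero \<in> Dops" by (metis diag_block_Dops assms(3) Dops.intros)
  have "op_xi \<circ> block D pzero pzero pzero \<circ> op_dxi = block pzero pzero pzero D"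
    using Weyl_0[OF assms(4)] by (auto simp: fun_eq_iff op_xi_def op_dxi_def)
  then have D: "block pzero pzero pzero D \<in> Dops" by (metis diag_block_Dops assms(4) Dops.intros)
  have "block A B C D = op_add (op_add (block A pzero pzero pzero) (block pzero B pzero pzero))
                                (op_add (block pzero pzero C pzero) (block pzero pzero pzero D))"
    by (auto simp: fun_eq_iff op_add_def)
  then show ?thesis using diag_block_Dops[OF assms(1)] B C D by (metis Dops.add_in)
qed

lemma Dops_eq_block: "a \<in> Dops \<Longrightarrow> a = block (blockA a) (blockB a) (blockC a) (blockD a)"
  using Dops_block sv_linear_eq_block by blast

lemma Dops_apply:
  assumes "a \<in> Dops"
  shows "a (p, q) = (blockA a p + blockB a q, blockC a p + blockD a q)"
  using arg_cong[OF Dops_eq_block[OF assms], of "\<lambda>f. f (p, q)"] by simp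

lemma Dops_entries_0:
  "a \<in> Dops \<Longrightarrow> blockA a 0 = 0 \<and> blockB a 0 = 0 \<and> blockC a 0 = 0 \<and> blockD a 0 = 0"
  using Dops_block Weyl_0 by blast

lemma Dops_0: "a \<in> Dops \<Longrightarrow> a (0, 0) = (0, 0)"
  by (simp add: Dops_apply Dops_entries_0)

lemma Dops_add: "a \<in> Dops \<Longrightarrow> a (u + v) = a u + a v"
  using Dops_block unfolding sv_linear_def by blast

lemma Dops_sv_smult: "a \<in> Dops \<Longrightarrow> a (sv_smult c u) = sv_smult c (a u)"
  using Dops_block unfolding sv_linear_def by blast

lemma Dops_diff: "a \<in> Dops \<Longrightarrow> a (u - v) = a u - a v"
proof -
  assume a: "a \<in> Dops"
  have "a (- v) = - a v" using Dops_sv_smult[OF a, of "-1" v] by (simp only: sv_smult_minus_1)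
  then show ?thesis using Dops_add[OF a, of u "- v"] by simp
qed

lemma op_zero_block: "op_zero = block pzero pzero pzero pzero"
  by (auto simp: fun_eq_iff op_zero_def)

lemma zero_Dops: "op_zero \<in> Dops"
  unfolding op_zero_block by (intro block_Dops Weyl_zero)

lemma op_zero_entries: "blockA op_zero = pzero" "blockB op_zero = pzero" "blockC op_zero = pzero"
    "blockD op_zero = pzero"
  by (simp_all add: op_zero_block)

lemma id_entries: "blockA id = id" "blockB id = pzero" "blockC id = pzero" "blockD id = id"
  by (auto simp: blockA_def blockB_def blockC_def blockD_def fun_eq_iff)

lemma add_entries:
  "blockA (f + g) = (\<lambda>p. blockA f p + blockA g p)" "blockB (f + g) = (\<lambda>p. blockB f p + blockB g p)"
  "blockC (f + g) = (\<lambda>p. blockC f p + blockC g p)" "blockD (f + g) = (\<lambda>p. blockD f p + blockD g p)"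
  by (auto simp: blockA_def blockB_def blockC_def blockD_def fun_eq_iff)

lemma smult_entries:
  "blockA (op_smult c f) = (\<lambda>p. Polynomial.smult c (blockA f p))"
  "blockB (op_smult c f) = (\<lambda>p. Polynomial.smult c (blockB f p))"
  "blockC (op_smult c f) = (\<lambda>p. Polynomial.smult c (blockC f p))"
  "blockD (op_smult c f) = (\<lambda>p. Polynomial.smult c (blockD f p))"
  by (auto simp: blockA_def blockB_def blockC_def blockD_def fun_eq_iff op_smult_def)

lemma comp_entries:
  assumes "f \<in> Dops"
  shows "blockA (f \<circ> g) = (\<lambda>p. blockA f (blockA g p) + blockB f (blockC g p))"
        "blockB (f \<circ> g) = (\<lambda>p. blockA f (blockB g p) + blockB f (blockD g p))"
        "blockC (f \<circ> g) = (\<lambda>p. blockC f (blockA g p) + blockD f (blockC g p))"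
        "blockD (f \<circ> g) = (\<lambda>p. blockC f (blockB g p) + blockD f (blockD g p))"
proof -
  have g: "g (p, 0) = (blockA g p, blockC g p)" "g (0, p) = (blockB g p, blockD g p)" for p
    by (simp_all add: blockA_def blockB_def blockC_def blockD_def)
  have fg: "blockA (f \<circ> g) p = fst (f (g (p, 0)))" "blockC (f \<circ> g) p = snd (f (g (p, 0)))"
    "blockB (f \<circ> g) p = fst (f (g (0, p)))" "blockD (f \<circ> g) p = snd (f (g (0, p)))" for p
    by (simp_all add: blockA_def blockB_def blockC_def blockD_def)
  show "blockA (f \<circ> g) = (\<lambda>p. blockA f (blockA g p) + blockB f (blockC g p))"
       "blockB (f \<circ> g) = (\<lambda>p. blockA f (blockB g p) + blockB f (blockD g p))"
       "blockC (f \<circ> g) = (\<lambda>p. blockC f (blockA g p) + blockD f (blockC g p))"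
       "blockD (f \<circ> g) = (\<lambda>p. blockC f (blockB g p) + blockD f (blockD g p))"
    by (simp_all only: fun_eq_iff fg g Dops_apply[OF assms] fst_conv snd_conv) simp_all
qed

section \<open>The grading of D\<close>

lemma zero_in_sv_deg: "(0, 0) \<in> sv_deg j"
  by (simp add: sv_deg_def)

lemma Dops_maps_sv_deg_iff:
  assumes "a \<in> Dops"
  shows "(\<forall>j. \<forall>v\<in>sv_deg j. a v \<in> sv_deg (j + k))
     \<longleftrightarrow> (\<forall>p. (blockA a p, blockC a p) \<in> sv_deg k) \<and> (\<forall>q. (blockB a q, blockD a q) \<in> sv_deg (k - 1))"
  (is "?maps \<longleftrightarrow> ?blocks")
proof -
  have a: "a (p, 0) = (blockA a p, blockC a p)" "a (0, q) = (blockB a q, blockD a q)" for p q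
    by (simp_all add: Dops_apply[OF assms] Dops_entries_0[OF assms])
  show ?thesis
  proof
    assume maps: ?maps
    have "(p, 0) \<in> sv_deg 0" "(0, q) \<in> sv_deg (-1)" for p q by (simp_all add: sv_deg_def)
    then have "a (p, 0) \<in> sv_deg (0 + k)" "a (0, q) \<in> sv_deg (-1 + k)" for p q
      using maps by blast+
    then show ?blocks by (simp add: a)
  next
    assume blocks: ?blocks
    show ?maps
    proof (intro allI ballI)
      fix j v assume "v \<in> sv_deg j"
      then consider p where "j = 0" "v = (p, 0)" | q where "j = -1" "v = (0, q)" | "v = (0, 0)"
        by (auto simp: sv_deg_def split: if_splits)
      then show "a v \<in> sv_deg (j + k)"
        by cases (use blocks in \<open>simp_all add: a Dops_entries_0[OF assms] zero_in_sv_deg\<close>)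
    qed
  qed
qed

lemma D11_hom_iff: "a \<in> dg_hom (D11 n) k \<longleftrightarrow> a \<in> Dops \<and>
   (if k = 0 then blockB a = pzero \<and> blockC a = pzero
    else if k = 1 then blockA a = pzero \<and> blockC a = pzero \<and> blockD a = pzero
    else if k = -1 then blockA a = pzero \<and> blockB a = pzero \<and> blockD a = pzero
    else blockA a = pzero \<and> blockB a = pzero \<and> blockC a = pzero \<and> blockD a = pzero)"
proof (cases "a \<in> Dops")
  case True
  have deg: "(x, y) \<in> sv_deg j \<longleftrightarrow> (if j = 0 then y = 0 else if j = -1 then x = 0 else x = 0 \<and> y = 0)"
    for x y :: "complex poly" and j by (simp add: sv_deg_def)
  have "a \<in> dg_hom (D11 n) k \<longleftrightarrow>
      (\<forall>p. (blockA a p, blockC a p) \<in> sv_deg k) \<and> (\<forall>q. (blockB a q, blockD a q) \<in> sv_deg (k - 1))"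
    using True by (simp add: D11_def Dops_maps_sv_deg_iff[OF True])
  then show ?thesis
    using True by (cases "k = 0"; cases "k = 1"; cases "k = -1")
      (simp_all add: deg fun_eq_iff all_conj_distrib conj_ac)
qed (simp add: D11_def)

lemma D11_hom_Dops: "a \<in> dg_hom (D11 n) k \<Longrightarrow> a \<in> Dops"
  by (simp add: D11_hom_iff)

lemma D11_hom_eq_zero:
  assumes "a \<in> dg_hom (D11 n) k" and "k \<notin> {-1, 0, 1}"
  shows "a = op_zero"
proof -
  have "a = block (blockA a) (blockB a) (blockC a) (blockD a)"
    using assms(1) D11_hom_Dops Dops_eq_block by blast
  also have "\<dots> = op_zero" using assms by (simp add: D11_hom_iff op_zero_block)
  finally show ?thesis .
qed

lemma D11_hom_mult:
  assumes "a \<in> dg_hom (D11 n) k" and "b \<in> dg_hom (D11 n) l"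
  shows "a \<circ> b \<in> dg_hom (D11 n) (k + l)"
proof -
  have "a (b v) \<in> sv_deg (j + (k + l))" if "v \<in> sv_deg j" for j v
  proof -
    have "b v \<in> sv_deg (j + l)" using assms(2) that by (simp add: D11_def)
    then have "a (b v) \<in> sv_deg (j + l + k)" using assms(1) by (simp add: D11_def)
    then show ?thesis by (simp add: ac_simps)
  qed
  then show ?thesis using assms by (auto simp: D11_def Dops.intros)
qed

lemma D11_hom_zero: "op_zero \<in> dg_hom (D11 n) k"
  by (simp add: D11_hom_iff zero_Dops op_zero_entries)

lemma D11_hom_add: "a \<in> dg_hom (D11 n) k \<Longrightarrow> b \<in> dg_hom (D11 n) k \<Longrightarrow> op_add a b \<in> dg_hom (D11 n) k"
  using Dops.add_in[of a b] unfolding D11_hom_iff op_add_eq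
  by (auto simp: add_entries split: if_splits)

lemma D11_hom_smult: "a \<in> dg_hom (D11 n) k \<Longrightarrow> op_smult c a \<in> dg_hom (D11 n) k"
  using Dops.smult_in[of a c] unfolding D11_hom_iff
  by (auto simp: smult_entries split: if_splits)

lemma D11_hom_id: "id \<in> dg_hom (D11 n) 0"
  by (simp add: D11_hom_iff id_entries Dops.id_in)

definition hom_component :: "sop \<Rightarrow> int \<Rightarrow> sop" where
  "hom_component a k = (if k = 0 then block (blockA a) pzero pzero (blockD a)
     else if k = 1 then block pzero (blockB a) pzero pzero
     else if k = -1 then block pzero pzero (blockC a) pzero else op_zero)"

lemma hom_component_hom:
  assumes "a \<in> Dops"
  shows "hom_component a k \<in> dg_hom (D11 n) k"
proof -
  have "blockA a \<in> Weyl" "blockB a \<in> Weyl" "blockC a \<in> Weyl" "blockD a \<in> Weyl"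
    using Dops_block[OF assms] by auto
  then show ?thesis unfolding D11_hom_iff hom_component_def
    by (auto simp: Dops_entries_0[OF assms] block_Dops Weyl_zero zero_Dops op_zero_entries)
qed

lemma dg_sum_Dops:
  assumes "dg_add A = op_add" "dg_zero A = op_zero" and supp: "{k. f k \<noteq> op_zero} \<subseteq> {-1, 0, 1}"
  shows "dg_sum A f = f (-1) + f 0 + f 1"
proof -
  let ?S = "{k. f k \<noteq> op_zero}"
  have "foldr (\<lambda>k s. op_add (f k) s) xs op_zero = sum_list (map f xs)" for xs
    by (induction xs) (simp_all add: op_add_eq op_zero_eq)
  then have "dg_sum A f = sum_list (map f (sorted_list_of_set ?S))"
    by (simp add: dg_sum_def assms(1,2))
  also have "\<dots> = sum f ?S"
    using finite_subset[OF supp] by (simp add: sum_list_distinct_conv_sum_set)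
  also have "\<dots> = sum f {-1, 0, 1}"
    by (rule sum.mono_neutral_left) (use supp in \<open>auto simp: op_zero_eq\<close>)
  finally show ?thesis by (simp add: add.assoc)
qed

lemma hom_component_support: "{k. hom_component a k \<noteq> op_zero} \<subseteq> {-1, 0, 1}"
  by (auto simp: hom_component_def)

lemma dg_sum_hom_component:
  assumes "a \<in> Dops" "dg_add A = op_add" "dg_zero A = op_zero"
  shows "dg_sum A (hom_component a) = a"
proof (rule ext)
  fix v :: sv
  obtain p q where "v = (p, q)" by fastforce
  then show "dg_sum A (hom_component a) v = a v"
    by (simp add: dg_sum_Dops[OF assms(2,3) hom_component_support] hom_component_def
                  Dops_apply[OF assms(1)] Dops_entries_0[OF assms(1)])
qed

lemma hom_component_unique:
  assumes "\<forall>k. f k \<in> dg_hom (D11 n) k" and "dg_add A = op_add" "dg_zero A = op_zero"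
  shows "f = hom_component (dg_sum A f)"
proof -
  have supp: "{k. f k \<noteq> op_zero} \<subseteq> {-1, 0, 1}" using assms(1) D11_hom_eq_zero by blast
  have f: "f k = block (blockA (f k)) (blockB (f k)) (blockC (f k)) (blockD (f k))" for k
    using assms(1) D11_hom_Dops Dops_eq_block by blast
  have hom: "f (-1) \<in> dg_hom (D11 n) (-1)" "f 0 \<in> dg_hom (D11 n) 0" "f 1 \<in> dg_hom (D11 n) 1"
    using assms(1) by auto
  show ?thesis
  proof (rule ext)
    fix k :: int
    consider "k = 0" | "k = 1" | "k = -1" | "k \<notin> {-1, 0, 1}" by blast
    then show "f k = hom_component (dg_sum A f) k"
    proof cases
      case 4
      then have "f k = op_zero" using D11_hom_eq_zero assms(1) by blast
      with 4 show ?thesis by (simp add: hom_component_def)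
    qed (use hom f[of k] in
      \<open>auto simp: dg_sum_Dops[OF assms(2,3) supp] hom_component_def D11_hom_iff add_entries
          fun_eq_iff\<close>)
  qed
qed

lemma Dops_graded_decomposition:
  assumes "a \<in> Dops" "dg_add A = op_add" "dg_zero A = op_zero"
    and "\<And>k. dg_hom A k \<subseteq> dg_hom (D11 n) k" and "\<And>k. hom_component a k \<in> dg_hom A k"
  shows "\<exists>!f. (\<forall>k. f k \<in> dg_hom A k) \<and> finite {k. f k \<noteq> dg_zero A} \<and> a = dg_sum A f"
proof (rule ex1I[of _ "hom_component a"])
  show "(\<forall>k. hom_component a k \<in> dg_hom A k) \<and> finite {k. hom_component a k \<noteq> dg_zero A}
      \<and> a = dg_sum A (hom_component a)"
    using assms hom_component_support[of a] dg_sum_hom_component[OF assms(1-3)]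
    by (auto intro: finite_subset)
next
  fix f assume "(\<forall>k. f k \<in> dg_hom A k) \<and> finite {k. f k \<noteq> dg_zero A} \<and> a = dg_sum A f"
  then show "f = hom_component a" using hom_component_unique[of f n A] assms(2-4) by blast
qed

section \<open>The differential and the dg algebra D\<close>

abbreviation koszul :: "nat \<Rightarrow> sop" where "koszul n \<equiv> (op_x ^^ n) \<circ> op_dxi"
abbreviation dQ :: "nat \<Rightarrow> sop \<Rightarrow> sop" where "dQ n \<equiv> super_bracket_odd (koszul n)"

lemma op_x_pow_apply: "(op_x ^^ k) (p, q) = (monom 1 k * p, monom 1 k * q)"
  by (induction k arbitrary: p q) (auto simp: op_x_def monom_Suc)

lemma koszul_apply: "(op_x ^^ n) (op_dxi v) = (monom 1 n * snd v, 0)"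
  by (cases v) (simp add: op_dxi_def op_x_pow_apply)

lemma op_parity_apply: "op_parity v = (fst v, - snd v)"
  by (cases v) (simp add: op_parity_def)

lemma sv_smult_diff: "sv_smult c (u - v) = sv_smult c u - sv_smult c v"
  by (simp add: sv_smult_def smult_diff_right)

lemma dQ_apply: "dQ n a v = (monom 1 n * snd (a v) - fst (a (monom 1 n * snd v, 0)), snd (a
    (monom 1 n * snd v, 0)))"
  by (simp add: super_bracket_odd_def op_add_def op_smult_def koszul_apply op_parity_apply)

lemma dQ_conj: "dQ n a v = koszul n (a v) - op_parity (a (op_parity (koszul n v)))"
  by (simp add: super_bracket_odd_def op_add_eq op_smult_eq sv_smult_minus_1 del: comp_apply)
      (simp add: o_def)

lemma dQ_block:
  assumes "a \<in> Dops"
  shows "dQ n a = block (\<lambda>p. monom 1 n * blockC a p) (\<lambda>q. monom 1 n * blockD a q - blockA a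
      (monom 1 n * q))
                        pzero (\<lambda>q. blockC a (monom 1 n * q))"
proof (rule ext)
  fix v :: sv
  obtain p q where "v = (p, q)" by fastforce
  then show "dQ n a v = block (\<lambda>p. monom 1 n * blockC a p) (\<lambda>q. monom 1 n * blockD a q - blockA a
      (monom 1 n * q))
                        pzero (\<lambda>q. blockC a (monom 1 n * q)) v"
    by (simp add: dQ_apply Dops_apply[OF assms] Dops_entries_0[OF assms] algebra_simps)
qed

lemma dQ_Dops:
  assumes "a \<in> Dops"
  shows "dQ n a \<in> Dops"
proof -
  have W: "blockA a \<in> Weyl" "blockC a \<in> Weyl" "blockD a \<in> Weyl" using Dops_block[OF assms] by auto
  have mult_W: "(\<lambda>p. monom 1 n * f p) \<in> Weyl" "(\<lambda>p. f (monom 1 n * p)) \<in> Weyl" if "f \<in> Weyl" for f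
    using Weyl_comp[OF Weyl_mult that] Weyl_comp[OF that Weyl_mult] by (simp_all add: o_def)
  show ?thesis unfolding dQ_block[OF assms]
    by (rule block_Dops[OF mult_W(1)[OF W(2)] Weyl_diff[OF mult_W(1)[OF W(3)] mult_W(2)[OF W(1)]]
                           Weyl_zero mult_W(2)[OF W(2)]])
qed

lemma dQ_entries:
  assumes "a \<in> Dops"
  shows "blockA (dQ n a) = (\<lambda>p. monom 1 n * blockC a p)"
    "blockB (dQ n a) = (\<lambda>q. monom 1 n * blockD a q - blockA a (monom 1 n * q))"
    "blockC (dQ n a) = pzero" "blockD (dQ n a) = (\<lambda>q. blockC a (monom 1 n * q))"
  by (simp_all add: dQ_block[OF assms] Dops_entries_0[OF assms])

lemma dQ_dQ: "a \<in> Dops \<Longrightarrow> dQ n (dQ n a) = op_zero"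
  by (rule ext) (simp add: dQ_apply Dops_0 op_zero_def)

lemma dQ_op_zero: "dQ n op_zero = op_zero"
  by (rule ext) (simp add: dQ_apply op_zero_def)

lemma dQ_add: "dQ n (op_add a b) = op_add (dQ n a) (dQ n b)"
  by (rule ext) (simp add: dQ_apply op_add_def algebra_simps)

lemma dQ_smult: "dQ n (op_smult c a) = op_smult c (dQ n a)"
  by (rule ext) (simp add: dQ_apply op_smult_def smult_diff_right)

lemma dQ_hom:
  assumes "a \<in> dg_hom (D11 n) k"
  shows "dQ n a \<in> dg_hom (D11 n) (k + 1)"
proof -
  have a: "a \<in> Dops" using assms D11_hom_Dops by blast
  consider "k = 0" | "k = 1" | "k = -1" | "k \<notin> {-1, 0, 1}" by blast
  then show ?thesis
    by cases (use assms in \<open>auto simp: D11_hom_iff dQ_Dops[OF a] dQ_entries[OF a]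
        Dops_entries_0[OF a] fun_eq_iff\<close>)
qed

lemma parity_conj_hom:
  assumes "a \<in> dg_hom (D11 n) k"
  shows "op_parity (a (op_parity w)) = sv_smult ((-1) ^ nat \<bar>k\<bar>) (a w)"
proof -
  obtain p q where w: "w = (p, q)" by fastforce
  have a: "a \<in> Dops" using assms D11_hom_Dops by blast
  have "poly_linear (blockB a)" "poly_linear (blockD a)" using Dops_block[OF a] Weyl_poly_linear
    by auto
  then have neg: "blockB a (- q) = - blockB a q" "blockD a (- q) = - blockD a q"
    using poly_linear_uminus by auto
  consider "k = 0" | "k = 1" | "k = -1" | "k \<notin> {-1, 0, 1}" by blast
  then show ?thesis
    by cases (use assms in \<open>simp_all add: D11_hom_iff w op_parity_apply Dops_apply[OF a] neg
        sv_smult_def\<close>)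
qed

lemma dQ_leibniz:
  assumes ak: "a \<in> dg_hom (D11 n) k" and b: "b \<in> Dops"
  shows "dQ n (a \<circ> b) = op_add (dQ n a \<circ> b) (op_smult ((-1) ^ nat \<bar>k\<bar>) (a \<circ> dQ n b))"
proof (rule ext)
  fix v
  define s :: complex where "s = (-1) ^ nat \<bar>k\<bar>"
  have a: "a \<in> Dops" using ak D11_hom_Dops by blast
  have sign: "op_parity (a (op_parity w)) = sv_smult s (a w)" for w
    using parity_conj_hom[OF ak] by (simp add: s_def)
  have sign': "sv_smult s (a (op_parity w)) = op_parity (a w)" for w
    using sign[of "op_parity w"] by (simp add: op_parity_apply)
  have "op_add (dQ n a \<circ> b) (op_smult s (a \<circ> dQ n b)) v
     = (koszul n (a (b v)) - op_parity (a (op_parity (koszul n (b v)))))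
       + sv_smult s (a (koszul n (b v)) - a (op_parity (b (op_parity (koszul n v)))))"
    by (simp add: op_add_eq op_smult_eq dQ_conj Dops_diff[OF a])
  also have "\<dots> = koszul n (a (b v)) - op_parity (a (b (op_parity (koszul n v))))"
    by (simp add: sv_smult_diff sign sign')
  also have "\<dots> = dQ n (a \<circ> b) v" by (simp add: dQ_conj)
  finally show "dQ n (a \<circ> b) v = op_add (dQ n a \<circ> b) (op_smult ((-1) ^ nat \<bar>k\<bar>) (a \<circ> dQ n b)) v"
    by (simp add: s_def)
qed

lemma D11_simps:
  "dg_car (D11 n) = Dops" "dg_zero (D11 n) = op_zero" "dg_one (D11 n) = id"
  "dg_add (D11 n) = op_add" "dg_smult (D11 n) = op_smult" "dg_mult (D11 n) = (\<circ>)"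
  "dg_d (D11 n) = dQ n"
  by (simp_all add: D11_def)

text \<open>Everything but the grading is inherited from D by any subalgebra sharing its operations.\<close>

lemma is_dga_Dops_subalgebra:
  assumes ops: "dg_zero A = op_zero" "dg_one A = id" "dg_add A = op_add" "dg_smult A = op_smult"
      "dg_mult A = (\<circ>)" "dg_d A = dQ n"
    and car: "dg_car A \<subseteq> Dops" "id \<in> dg_car A"
      "\<And>a b. a \<in> dg_car A \<Longrightarrow> b \<in> dg_car A \<Longrightarrow> op_add a b \<in> dg_car A"
      "\<And>c a. a \<in> dg_car A \<Longrightarrow> op_smult c a \<in> dg_car A"
      "\<And>a b. a \<in> dg_car A \<Longrightarrow> b \<in> dg_car A \<Longrightarrow> a \<circ> b \<in> dg_car A"
      "\<And>a. a \<in> dg_car A \<Longrightarrow> dQ n a \<in> dg_car A"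
    and hom: "\<And>k. dg_hom A k \<subseteq> dg_car A \<inter> dg_hom (D11 n) k"
      "\<And>k. op_zero \<in> dg_hom A k"
      "\<And>k a b. a \<in> dg_hom A k \<Longrightarrow> b \<in> dg_hom A k \<Longrightarrow> op_add a b \<in> dg_hom A k"
      "\<And>k c a. a \<in> dg_hom A k \<Longrightarrow> op_smult c a \<in> dg_hom A k"
      "\<And>k l a b. a \<in> dg_hom A k \<Longrightarrow> b \<in> dg_hom A l \<Longrightarrow> a \<circ> b \<in> dg_hom A (k + l)"
      "id \<in> dg_hom A 0"
      "\<And>k a. a \<in> dg_hom A k \<Longrightarrow> dQ n a \<in> dg_hom A (k + 1)"
      "\<And>a k. a \<in> dg_car A \<Longrightarrow> hom_component a k \<in> dg_hom A k"
  shows "is_dga A"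
  unfolding is_dga_def ops
proof (intro conjI)
  show "op_zero \<in> dg_car A" using hom(1,2) by blast
  show "\<forall>a\<in>dg_car A. \<forall>b\<in>dg_car A. op_add a b \<in> dg_car A" using car(3) by blast
  show "\<forall>c. \<forall>a\<in>dg_car A. op_smult c a \<in> dg_car A" using car(4) by blast
  show "\<forall>a\<in>dg_car A. \<forall>b\<in>dg_car A. \<forall>c\<in>dg_car A. op_add (op_add a b) c = op_add a (op_add b c)"
    by (simp add: op_add_eq add.assoc)
  show "\<forall>a\<in>dg_car A. \<forall>b\<in>dg_car A. op_add a b = op_add b a"
    by (simp add: op_add_eq add.commute)
  show "\<forall>a\<in>dg_car A. op_add a op_zero = a"
    by (simp add: op_add_eq op_zero_eq)
  show "\<forall>a\<in>dg_car A. op_add a (op_smult (-1) a) = op_zero"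
    by (simp add: op_add_eq op_zero_eq op_smult_eq sv_smult_minus_1 fun_eq_iff)
  show "\<forall>a\<in>dg_car A. op_smult 1 a = a"
    by (simp add: op_smult_eq sv_smult_def)
  show "\<forall>c e. \<forall>a\<in>dg_car A. op_smult (c * e) a = op_smult c (op_smult e a)"
    by (simp add: op_smult_eq sv_smult_def)
  show "\<forall>c e. \<forall>a\<in>dg_car A. op_smult (c + e) a = op_add (op_smult c a) (op_smult e a)"
    by (simp add: op_smult_eq op_add_eq sv_smult_def fun_eq_iff smult_add_left)
  show "\<forall>c. \<forall>a\<in>dg_car A. \<forall>b\<in>dg_car A. op_smult c (op_add a b) = op_add (op_smult c a)
      (op_smult c b)"
    by (simp add: op_smult_eq op_add_eq sv_smult_def fun_eq_iff smult_add_right)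
  show "id \<in> dg_car A" by (rule car(2))
  show "\<forall>a\<in>dg_car A. \<forall>b\<in>dg_car A. a \<circ> b \<in> dg_car A" using car(5) by blast
  show "\<forall>a\<in>dg_car A. \<forall>b\<in>dg_car A. \<forall>c\<in>dg_car A. a \<circ> b \<circ> c = a \<circ> (b \<circ> c)"
    by (simp add: o_assoc)
  show "\<forall>a\<in>dg_car A. id \<circ> a = a \<and> a \<circ> id = a" by simp
  show "\<forall>a\<in>dg_car A. \<forall>b\<in>dg_car A. \<forall>c\<in>dg_car A.
      a \<circ> op_add b c = op_add (a \<circ> b) (a \<circ> c) \<and> op_add a b \<circ> c = op_add (a \<circ> c) (b \<circ> c)"
    using car(1) by (auto simp: op_add_eq fun_eq_iff Dops_add)
  show "\<forall>e. \<forall>a\<in>dg_car A. \<forall>b\<in>dg_car A.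
      op_smult e a \<circ> b = op_smult e (a \<circ> b) \<and> a \<circ> op_smult e b = op_smult e (a \<circ> b)"
    using car(1) by (auto simp: op_smult_eq fun_eq_iff Dops_sv_smult)
  show "\<forall>k. dg_hom A k \<subseteq> dg_car A \<and> op_zero \<in> dg_hom A k
      \<and> (\<forall>a\<in>dg_hom A k. \<forall>b\<in>dg_hom A k. op_add a b \<in> dg_hom A k)
      \<and> (\<forall>c. \<forall>a\<in>dg_hom A k. op_smult c a \<in> dg_hom A k)"
    using hom(1-4) by blast
  show "\<forall>a\<in>dg_car A. \<exists>!f. (\<forall>k. f k \<in> dg_hom A k) \<and> finite {k. f k \<noteq> op_zero} \<and> a = dg_sum A f"
  proof
    fix a assume a: "a \<in> dg_car A"
    have "dg_hom A k \<subseteq> dg_hom (D11 n) k" for k using hom(1) by blast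
    from Dops_graded_decomposition[OF subsetD[OF car(1) a] ops(3,1) this hom(8)[OF a]]
    show "\<exists>!f. (\<forall>k. f k \<in> dg_hom A k) \<and> finite {k. f k \<noteq> op_zero} \<and> a = dg_sum A f"
      by (simp only: ops(1))
  qed
  show "\<forall>k l. \<forall>a\<in>dg_hom A k. \<forall>b\<in>dg_hom A l. a \<circ> b \<in> dg_hom A (k + l)" using hom(5) by blast
  show "id \<in> dg_hom A 0" by (rule hom(6))
  show "\<forall>k. \<forall>a\<in>dg_hom A k. dQ n a \<in> dg_hom A (k + 1)" using hom(7) by blast
  show "\<forall>a\<in>dg_car A. dQ n a \<in> dg_car A" using car(6) by blast
  show "\<forall>a\<in>dg_car A. \<forall>b\<in>dg_car A. dQ n (op_add a b) = op_add (dQ n a) (dQ n b)"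
    by (simp add: dQ_add)
  show "\<forall>c. \<forall>a\<in>dg_car A. dQ n (op_smult c a) = op_smult c (dQ n a)"
    by (simp add: dQ_smult)
  show "\<forall>a\<in>dg_car A. dQ n (dQ n a) = op_zero" using car(1) dQ_dQ by blast
  show "\<forall>k. \<forall>a\<in>dg_hom A k. \<forall>b\<in>dg_car A.
      dQ n (a \<circ> b) = op_add (dQ n a \<circ> b) (op_smult ((-1) ^ nat \<bar>k\<bar>) (a \<circ> dQ n b))"
  proof (intro allI ballI)
    fix k a b assume "a \<in> dg_hom A k" "b \<in> dg_car A"
    then show "dQ n (a \<circ> b) = op_add (dQ n a \<circ> b) (op_smult ((-1) ^ nat \<bar>k\<bar>) (a \<circ> dQ n b))"
      using dQ_leibniz[of a n k b] hom(1)[of k] car(1) by (meson IntE subsetD)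
  qed
qed

lemma is_dga_D11: "is_dga (D11 n)"
  by (rule is_dga_Dops_subalgebra[OF D11_simps(2-7)])
     (simp_all add: D11_simps D11_hom_Dops subset_iff Dops.intros dQ_Dops D11_hom_zero D11_hom_add
       D11_hom_smult D11_hom_mult D11_hom_id dQ_hom hom_component_hom)

section \<open>The matrix dg algebra\<close>

lemma gl_dga_simps:
  "dg_car (gl_dga n) = carrier_mat n n" "dg_zero (gl_dga n) = 0\<^sub>m n n"
  "dg_one (gl_dga n) = 1\<^sub>m n" "dg_add (gl_dga n) = (+)" "dg_smult (gl_dga n) = (\<cdot>\<^sub>m)"
  "dg_mult (gl_dga n) = (*)" "dg_hom (gl_dga n) = (\<lambda>k. if k = 0 then carrier_mat n n
      else {0\<^sub>m n n})"
  "dg_d (gl_dga n) = (\<lambda>_. 0\<^sub>m n n)"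
  by (simp_all add: gl_dga_def)

lemma dg_sum_gl_dga:
  assumes "\<forall>k. k \<noteq> 0 \<longrightarrow> f k = 0\<^sub>m n n" and "f 0 \<in> carrier_mat n n"
  shows "dg_sum (gl_dga n) f = f 0"
proof (cases "f 0 = 0\<^sub>m n n")
  case True
  then have "{k. f k \<noteq> dg_zero (gl_dga n)} = {}" using assms by (simp add: gl_dga_simps) metis
  then show ?thesis using True by (simp add: dg_sum_def gl_dga_simps)
next
  case False
  then have "{k. f k \<noteq> dg_zero (gl_dga n)} = {0}" using assms by (auto simp: gl_dga_simps)
  then show ?thesis using assms(2) by (simp add: dg_sum_def gl_dga_simps)
qed

lemma is_dga_gl_dga: "is_dga (gl_dga n)"
  unfolding is_dga_def gl_dga_simps
proof (intro conjI)
  show "\<forall>a\<in>carrier_mat n n. \<exists>!f. (\<forall>k. f k \<in> (if k = 0 then carrier_mat n n else {0\<^sub>m n n}))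
        \<and> finite {k. f k \<noteq> 0\<^sub>m n n} \<and> a = dg_sum (gl_dga n) f"
  proof
    fix a :: "complex mat" assume a: "a \<in> carrier_mat n n"
    let ?f = "\<lambda>k::int. if k = 0 then a else 0\<^sub>m n n"
    show "\<exists>!f. (\<forall>k. f k \<in> (if k = 0 then carrier_mat n n else {0\<^sub>m n n}))
        \<and> finite {k. f k \<noteq> 0\<^sub>m n n} \<and> a = dg_sum (gl_dga n) f"
    proof (rule ex1I[of _ ?f])
      have "{k. ?f k \<noteq> 0\<^sub>m n n} \<subseteq> {0}" by auto
      then show "(\<forall>k. ?f k \<in> (if k = 0 then carrier_mat n n else {0\<^sub>m n n}))
        \<and> finite {k. ?f k \<noteq> 0\<^sub>m n n} \<and> a = dg_sum (gl_dga n) ?f"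
        using a dg_sum_gl_dga[of ?f n] by (auto intro: finite_subset)
    next
      fix f assume f: "(\<forall>k. f k \<in> (if k = 0 then carrier_mat n n else {0\<^sub>m n n}))
        \<and> finite {k. f k \<noteq> 0\<^sub>m n n} \<and> a = dg_sum (gl_dga n) f"
      then have z: "\<forall>k. k \<noteq> 0 \<longrightarrow> f k = 0\<^sub>m n n" and c: "f 0 \<in> carrier_mat n n"
        by (metis singletonD, metis)
      have "a = f 0" using f dg_sum_gl_dga[OF z c] by simp
      then show "f = ?f" using z by auto
    qed
  qed
qed (auto simp: assoc_add_mat comm_add_mat assoc_mult_mat mult_add_distrib_mat add_mult_distrib_mat
      mult_smult_assoc_mat mult_smult_distrib add_smult_distrib_left_mat add_smult_distrib_right_mat
      smult_zero_mat right_mult_zero_mat left_mult_zero_mat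
      intro!: eq_matI split: if_splits)

section \<open>Cohomology of D and its truncation\<close>

lemma D11_cocycle_0_iff:
  "a \<in> dg_cocycles (D11 n) 0 \<longleftrightarrow> a \<in> Dops \<and> blockB a = pzero \<and> blockC a = pzero
     \<and> (\<forall>q. blockA a (monom 1 n * q) = monom 1 n * blockD a q)"
proof (cases "a \<in> Dops \<and> blockB a = pzero \<and> blockC a = pzero")
  case True
  then have a: "a \<in> Dops" by blast
  have "dQ n a = op_zero \<longleftrightarrow> blockB (dQ n a) = pzero"
    using True by (auto simp: dQ_block[OF a] op_zero_block fun_eq_iff)
  with True show ?thesis
    by (simp add: dg_cocycles_def D11_hom_iff D11_simps dQ_entries[OF a] fun_eq_iff) metis
qed (auto simp: dg_cocycles_def D11_hom_iff)

lemma D11_cocycle_neg1_eq_zero: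
  assumes "z \<in> dg_cocycles (D11 n) (-1)"
  shows "z = op_zero"
proof -
  have z: "z \<in> Dops" "blockA z = pzero" "blockB z = pzero" "blockD z = pzero" "dQ n z = op_zero"
    using assms by (auto simp: dg_cocycles_def D11_hom_iff D11_simps)
  then have "monom 1 n * blockC z p = 0" for p
    using arg_cong[OF z(5), of blockA] by (simp add: dQ_entries[OF z(1)] op_zero_entries fun_eq_iff)
  then have "blockC z = pzero" by (simp add: fun_eq_iff)
  with z show ?thesis using Dops_eq_block[OF z(1)] by (simp add: op_zero_block)
qed

lemma D11_hom_1_coboundary:
  assumes "w \<in> dg_hom (D11 n) 1"
  shows "\<exists>b\<in>dg_hom (D11 n) 0. dQ n b = w"
proof -
  have w: "w \<in> Dops" "blockA w = pzero" "blockC w = pzero" "blockD w = pzero"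
    using assms by (auto simp: D11_hom_iff)
  obtain A D where AD: "A \<in> Weyl" "D \<in> Weyl" "\<And>q. blockB w q = monom 1 n * D q - A (monom 1 n * q)"
    using Weyl_coboundary[of "blockB w" n] Dops_block[OF w(1)] by blast
  have b: "block A pzero pzero D \<in> Dops" using AD by (intro block_Dops Weyl_zero)
  have "dQ n (block A pzero pzero D) = block pzero (blockB w) pzero pzero"
    using AD Weyl_0[OF AD(1)] Weyl_0[OF AD(2)] by (simp add: dQ_block[OF b] fun_eq_iff)
  also have "\<dots> = w" using Dops_eq_block[OF w(1)] w by simp
  finally show ?thesis
    using b Weyl_0[OF AD(1)] Weyl_0[OF AD(2)]
      by (intro bexI[of _ "block A pzero pzero D"]) (auto simp: D11_hom_iff)
qed

text \<open>Its elements are the sums of an arbitrary degree -1 part and a degree 0 cocycle.\<close>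

definition trunc_car :: "nat \<Rightarrow> sop set" where
  "trunc_car n = {a \<in> Dops. blockB a = pzero \<and> (\<forall>q. blockA a (monom 1 n * q) = monom 1 n
      * blockD a q)}"

definition trunc_hom :: "nat \<Rightarrow> int \<Rightarrow> sop set" where
  "trunc_hom n k = (if k < 0 then dg_hom (D11 n) k else if k = 0 then dg_cocycles (D11 n) 0
      else {op_zero})"

definition trunc_dga :: "nat \<Rightarrow> sop dga" where
  "trunc_dga n = (D11 n)\<lparr>dg_car := trunc_car n, dg_hom := trunc_hom n\<rparr>"

lemma trunc_dga_simps:
  "dg_car (trunc_dga n) = trunc_car n" "dg_hom (trunc_dga n) = trunc_hom n"
  "dg_zero (trunc_dga n) = op_zero" "dg_one (trunc_dga n) = id"
  "dg_add (trunc_dga n) = op_add" "dg_smult (trunc_dga n) = op_smult" "dg_mult (trunc_dga n) = (\<circ>)"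
  "dg_d (trunc_dga n) = dQ n"
  by (simp_all add: trunc_dga_def D11_def)

lemma trunc_car_Dops: "a \<in> trunc_car n \<Longrightarrow> a \<in> Dops"
  by (simp add: trunc_car_def)

lemma trunc_hom_subset: "trunc_hom n k \<subseteq> trunc_car n \<inter> dg_hom (D11 n) k"
proof
  fix a assume a: "a \<in> trunc_hom n k"
  consider "k < 0" | "k = 0" | "0 < k" by linarith
  then show "a \<in> trunc_car n \<inter> dg_hom (D11 n) k"
  proof cases
    case 1
    then have "k = -1 \<or> k \<notin> {-1, 0, 1}" by auto
    then show ?thesis
      using a 1 D11_hom_eq_zero[of a n k]
        by (auto simp: trunc_hom_def trunc_car_def D11_hom_iff op_zero_entries)
  next
    case 2
    then have c: "a \<in> dg_cocycles (D11 n) 0" using a by (simp add: trunc_hom_def)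
    then have "a \<in> dg_hom (D11 n) 0" by (simp add: dg_cocycles_def)
    moreover have "a \<in> trunc_car n" using c by (simp add: D11_cocycle_0_iff trunc_car_def)
    ultimately show ?thesis using 2 by blast
  next
    case 3
    then show ?thesis
      using a D11_hom_zero by (auto simp: trunc_hom_def trunc_car_def zero_Dops op_zero_entries)
  qed
qed

lemma trunc_hom_zero: "op_zero \<in> trunc_hom n k"
  using D11_hom_zero by (auto simp: trunc_hom_def dg_cocycles_def D11_simps dQ_op_zero)

lemma D11_cocycle_0_add:
  "a \<in> dg_cocycles (D11 n) 0 \<Longrightarrow> b \<in> dg_cocycles (D11 n) 0 \<Longrightarrow> op_add a b \<in> dg_cocycles (D11 n) 0"
  by (auto simp: D11_cocycle_0_iff op_add_eq add_entries distrib_left fun_eq_iff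
           intro: Dops.add_in[of a b, unfolded op_add_eq])

lemma D11_cocycle_0_smult: "a \<in> dg_cocycles (D11 n) 0 \<Longrightarrow> op_smult c a \<in> dg_cocycles (D11 n) 0"
  by (auto simp: D11_cocycle_0_iff smult_entries fun_eq_iff intro: Dops.smult_in)

lemma D11_cocycle_0_comp:
  assumes "a \<in> dg_cocycles (D11 n) 0" "b \<in> dg_cocycles (D11 n) 0"
  shows "a \<circ> b \<in> dg_cocycles (D11 n) 0"
proof -
  have a: "a \<in> Dops" using assms(1) by (simp add: D11_cocycle_0_iff)
  show ?thesis using assms Dops_entries_0[OF a]
    by (auto simp: D11_cocycle_0_iff comp_entries[OF a] intro: Dops.comp_in)
qed

lemma trunc_hom_add: "a \<in> trunc_hom n k \<Longrightarrow> b \<in> trunc_hom n k \<Longrightarrow> op_add a b \<in> trunc_hom n k"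
  by (cases "k < 0"; cases "k = 0")
     (simp_all add: trunc_hom_def D11_hom_add D11_cocycle_0_add, simp add: op_add_eq op_zero_eq)

lemma trunc_hom_smult: "a \<in> trunc_hom n k \<Longrightarrow> op_smult c a \<in> trunc_hom n k"
  by (cases "k < 0"; cases "k = 0")
     (simp_all add: trunc_hom_def D11_hom_smult D11_cocycle_0_smult, simp add: op_smult_def
         op_zero_def)

lemma trunc_hom_mult:
  assumes a: "a \<in> trunc_hom n k" and b: "b \<in> trunc_hom n l"
  shows "a \<circ> b \<in> trunc_hom n (k + l)"
proof -
  have aD: "a \<in> Dops" using a trunc_hom_subset trunc_car_Dops by blast
  consider "0 < k" | "0 < l" | "k = 0" "l = 0" | "k \<le> 0" "l \<le> 0" "k + l < 0" by linarith
  then show ?thesis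
  proof cases
    case 1
    then have "a \<circ> b = op_zero" using a by (simp add: trunc_hom_def op_zero_def comp_def)
    then show ?thesis using trunc_hom_zero by simp
  next
    case 2
    then have "a \<circ> b = op_zero" using b Dops_0[OF aD]
      by (simp add: trunc_hom_def op_zero_def fun_eq_iff)
    then show ?thesis using trunc_hom_zero by simp
  next
    case 3
    then show ?thesis using a b D11_cocycle_0_comp by (simp add: trunc_hom_def)
  next
    case 4
    have "a \<circ> b \<in> dg_hom (D11 n) (k + l)"
      using D11_hom_mult[OF subsetD[OF trunc_hom_subset a, THEN IntD2] subsetD[OF trunc_hom_subset
          b, THEN IntD2]] .
    with 4 show ?thesis by (simp add: trunc_hom_def)
  qed
qed

lemma trunc_hom_dQ:
  assumes a: "a \<in> trunc_hom n k"
  shows "dQ n a \<in> trunc_hom n (k + 1)"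
proof -
  have aD: "a \<in> Dops" and ah: "a \<in> dg_hom (D11 n) k" using a trunc_hom_subset trunc_car_Dops
    by blast+
  consider "k < -1" | "k = -1" | "k = 0" | "0 < k" by linarith
  then show ?thesis
  proof cases
    case 1
    then show ?thesis using dQ_hom[OF ah] by (simp add: trunc_hom_def)
  next
    case 2
    then show ?thesis
      using dQ_hom[OF ah] dQ_dQ[OF aD] by (simp add: trunc_hom_def dg_cocycles_def D11_simps)
  next
    case 3
    then show ?thesis using a by (simp add: trunc_hom_def dg_cocycles_def D11_simps)
  next
    case 4
    then show ?thesis using a by (simp add: trunc_hom_def dQ_op_zero)
  qed
qed

lemma hom_component_trunc_hom:
  assumes a: "a \<in> trunc_car n"
  shows "hom_component a k \<in> trunc_hom n k"
proof -
  have aD: "a \<in> Dops" using a by (rule trunc_car_Dops)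
  consider "k < 0" | "k = 0" | "0 < k" by linarith
  then show ?thesis
  proof cases
    case 1
    then show ?thesis using hom_component_hom[OF aD] by (simp add: trunc_hom_def)
  next
    case 2
    then show ?thesis using hom_component_hom[OF aD, of 0 n] a
      by (simp add: trunc_hom_def D11_cocycle_0_iff D11_hom_iff hom_component_def trunc_car_def
                    Dops_entries_0[OF aD])
  next
    case 3
    then show ?thesis using a
      by (simp add: trunc_hom_def hom_component_def trunc_car_def op_zero_block)
  qed
qed

lemma trunc_car_dQ:
  assumes "a \<in> trunc_car n"
  shows "dQ n a \<in> trunc_car n"
proof -
  have a: "a \<in> Dops" using assms by (rule trunc_car_Dops)
  then show ?thesis using assms dQ_Dops[OF a]
    by (simp add: trunc_car_def dQ_entries[OF a] fun_eq_iff)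
qed

lemma is_dga_trunc_dga: "is_dga (trunc_dga n)"
proof (rule is_dga_Dops_subalgebra[OF trunc_dga_simps(3-8)], unfold trunc_dga_simps)
  show "trunc_car n \<subseteq> Dops" using trunc_car_Dops by blast
  show "id \<in> trunc_car n" by (simp add: trunc_car_def id_entries Dops.id_in)
  show "op_add a b \<in> trunc_car n" if "a \<in> trunc_car n" "b \<in> trunc_car n" for a b
    using that Dops.add_in[of a b]
    by (auto simp: trunc_car_def op_add_eq add_entries distrib_left fun_eq_iff)
  show "op_smult c a \<in> trunc_car n" if "a \<in> trunc_car n" for c a
    using that by (auto simp: trunc_car_def smult_entries intro: Dops.smult_in)
  show "a \<circ> b \<in> trunc_car n" if "a \<in> trunc_car n" "b \<in> trunc_car n" for a b
    using that Dops_entries_0[of a]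
    by (auto simp: trunc_car_def comp_entries intro: Dops.comp_in)
  show "dQ n a \<in> trunc_car n" if "a \<in> trunc_car n" for a
    using that by (rule trunc_car_dQ)
  show "id \<in> trunc_hom n 0"
    by (simp add: trunc_hom_def D11_cocycle_0_iff id_entries Dops.id_in)
  show "trunc_hom n k \<subseteq> trunc_car n \<inter> dg_hom (D11 n) k" for k by (rule trunc_hom_subset)
  show "op_zero \<in> trunc_hom n k" for k by (rule trunc_hom_zero)
  show "op_add a b \<in> trunc_hom n k" if "a \<in> trunc_hom n k" "b \<in> trunc_hom n k" for k a b
    using that by (rule trunc_hom_add)
  show "op_smult c a \<in> trunc_hom n k" if "a \<in> trunc_hom n k" for k c a
    using that by (rule trunc_hom_smult)
  show "a \<circ> b \<in> trunc_hom n (k + l)" if "a \<in> trunc_hom n k" "b \<in> trunc_hom n l" for k l a b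
    using that by (rule trunc_hom_mult)
  show "dQ n a \<in> trunc_hom n (k + 1)" if "a \<in> trunc_hom n k" for k a
    using that by (rule trunc_hom_dQ)
  show "hom_component a k \<in> trunc_hom n k" if "a \<in> trunc_car n" for a k
    using that by (rule hom_component_trunc_hom)
qed

section \<open>Quasi-isomorphisms\<close>

lemma trunc_cocycle_zero: "op_zero \<in> dg_cocycles (trunc_dga n) k"
  by (simp add: dg_cocycles_def trunc_dga_simps trunc_hom_zero dQ_op_zero)

lemma trunc_coboundary_zero: "op_zero \<in> dg_coboundaries (trunc_dga n) k"
  unfolding dg_coboundaries_def trunc_dga_simps
  using image_eqI[of op_zero "dQ n" op_zero, OF dQ_op_zero[symmetric] trunc_hom_zero] .

lemma qiso_trunc_inclusion: "dga_qiso id (trunc_dga n) (D11 n)"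
  unfolding dga_qiso_def
proof (intro conjI)
  show "is_dga (trunc_dga n)" by (rule is_dga_trunc_dga)
  show "is_dga (D11 n)" by (rule is_dga_D11)
  show "dga_hom id (trunc_dga n) (D11 n)"
    unfolding dga_hom_def trunc_dga_simps D11_simps
    by (auto intro: trunc_car_Dops dest: subsetD[OF trunc_hom_subset])
  show "\<forall>k. \<forall>z\<in>dg_cocycles (trunc_dga n) k.
      id z \<in> dg_coboundaries (D11 n) k \<longrightarrow> z \<in> dg_coboundaries (trunc_dga n) k"
  proof (intro allI ballI impI)
    fix k z assume z: "z \<in> dg_cocycles (trunc_dga n) k" and c: "id z \<in> dg_coboundaries (D11 n) k"
    show "z \<in> dg_coboundaries (trunc_dga n) k"
    proof (cases "k \<le> 0")
      case True
      then have "trunc_hom n (k - 1) = dg_hom (D11 n) (k - 1)" by (simp add: trunc_hom_def)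
      then show ?thesis using c by (simp add: dg_coboundaries_def trunc_dga_simps D11_simps)
    next
      case False
      then have "z = op_zero" using z by (simp add: dg_cocycles_def trunc_dga_simps trunc_hom_def)
      then show ?thesis using trunc_coboundary_zero by simp
    qed
  qed
  show "\<forall>k. \<forall>w\<in>dg_cocycles (D11 n) k. \<exists>z\<in>dg_cocycles (trunc_dga n) k. \<exists>b\<in>dg_hom (D11 n) (k - 1).
      w = dg_add (D11 n) (id z) (dg_d (D11 n) b)"
  proof (intro allI ballI)
    fix k w assume w: "w \<in> dg_cocycles (D11 n) k"
    have plus_zero: "w = op_add w (dQ n op_zero)" "w = op_add op_zero w" for w
      by (simp_all only: dQ_op_zero) (simp_all add: op_add_eq op_zero_eq)
    consider "k \<le> 0" | "k = 1" | "1 < k" by linarith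
    then show "\<exists>z\<in>dg_cocycles (trunc_dga n) k. \<exists>b\<in>dg_hom (D11 n) (k - 1).
        w = dg_add (D11 n) (id z) (dg_d (D11 n) b)"
    proof cases
      case 1
      then have "w \<in> dg_cocycles (trunc_dga n) k"
        using w by (cases "k = 0")
            (auto simp: dg_cocycles_def trunc_dga_simps trunc_hom_def D11_simps)
      then show ?thesis
        unfolding D11_simps id_apply using D11_hom_zero[of n "k - 1"] plus_zero(1)[of w] by blast
    next
      case 2
      then obtain b where "b \<in> dg_hom (D11 n) (k - 1)" "dQ n b = w"
        using D11_hom_1_coboundary w by (auto simp: dg_cocycles_def)
      moreover have "w = op_add op_zero (dQ n b)" using plus_zero(2)[of w] \<open>dQ n b = w\<close> by simp
      ultimately show ?thesis
        unfolding D11_simps id_apply using trunc_cocycle_zero[of n k] by blast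
    next
      case 3
      then have "w = op_zero" using w D11_hom_eq_zero by (auto simp: dg_cocycles_def)
      then have "w = op_add op_zero (dQ n op_zero)" using plus_zero(1)[of op_zero] by simp
      then show ?thesis
        unfolding D11_simps id_apply using trunc_cocycle_zero[of n k] D11_hom_zero[of n "k - 1"]
          by blast
    qed
  qed
qed

text \<open>A degree 0 cocycle preserves the ideal (x^n) in its even component; trunc_mat is the
  matrix of the induced endomorphism of C[x]/(x^n) in the basis 1, x, ..., x^(n-1).\<close>

definition trunc_mat :: "nat \<Rightarrow> sop \<Rightarrow> complex mat" where
  "trunc_mat n a = mat n n (\<lambda>(i, j). coeff (blockA a (monom 1 j)) i)"

lemma trunc_car_blockA_ideal: "a \<in> trunc_car n \<Longrightarrow> monom 1 n dvd blockA a (monom 1 n * q)"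
  by (simp add: trunc_car_def)

lemma trunc_car_blockA_linear: "a \<in> trunc_car n \<Longrightarrow> poly_linear (blockA a)"
  using trunc_car_Dops Dops_block Weyl_poly_linear by blast

lemma trunc_mat_comp:
  assumes a: "a \<in> trunc_car n" and b: "b \<in> trunc_car n"
  shows "trunc_mat n (a \<circ> b) = trunc_mat n a * trunc_mat n b"
proof (rule eq_matI)
  have aD: "a \<in> Dops" using a by (rule trunc_car_Dops)
  have B: "blockB a = pzero" using a by (simp add: trunc_car_def)
  fix i j assume "i < dim_row (trunc_mat n a * trunc_mat n b)" "j < dim_col (trunc_mat n a
      * trunc_mat n b)"
  then have i: "i < n" and j: "j < n" by (auto simp: trunc_mat_def)
  have "trunc_mat n (a \<circ> b) $$ (i, j) = coeff (blockA a (blockA b (monom 1 j))) i"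
    using i j by (simp add: trunc_mat_def comp_entries[OF aD] B)
  also have "\<dots> = (\<Sum>l<n. coeff (blockA a (monom 1 l)) i * coeff (blockA b (monom 1 j)) l)"
    by (rule coeff_ideal_preserving[OF trunc_car_blockA_linear[OF a] trunc_car_blockA_ideal[OF a]
        i])
  also have "\<dots> = (trunc_mat n a * trunc_mat n b) $$ (i, j)"
    using i j by (simp add: trunc_mat_def scalar_prod_def atLeast0LessThan)
  finally show "trunc_mat n (a \<circ> b) $$ (i, j) = (trunc_mat n a * trunc_mat n b) $$ (i, j)" .
qed (simp_all add: trunc_mat_def)

lemma trunc_mat_eq_0: "blockA a = pzero \<Longrightarrow> trunc_mat n a = 0\<^sub>m n n"
  by (rule eq_matI) (auto simp: trunc_mat_def)

lemma trunc_mat_dQ: "a \<in> Dops \<Longrightarrow> trunc_mat n (dQ n a) = 0\<^sub>m n n"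
  by (rule eq_matI) (auto simp: trunc_mat_def dQ_entries coeff_monom_mult)

lemma trunc_mat_hom: "dga_hom (trunc_mat n) (trunc_dga n) (gl_dga n)"
  unfolding dga_hom_def trunc_dga_simps gl_dga_simps
proof (intro conjI ballI allI)
  show "trunc_mat n a \<in> carrier_mat n n" for a by (simp add: trunc_mat_def)
  show "trunc_mat n (op_add a b) = trunc_mat n a + trunc_mat n b" for a b
    by (rule eq_matI) (auto simp: trunc_mat_def op_add_eq add_entries)
  show "trunc_mat n (op_smult c a) = c \<cdot>\<^sub>m trunc_mat n a" for c a
    by (rule eq_matI) (auto simp: trunc_mat_def smult_entries)
  show "trunc_mat n (a \<circ> b) = trunc_mat n a * trunc_mat n b" if "a \<in> trunc_car n"
      "b \<in> trunc_car n" for a b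
    using that by (rule trunc_mat_comp)
  show "trunc_mat n id = 1\<^sub>m n" by (rule eq_matI) (auto simp: trunc_mat_def id_entries coeff_monom)
  show "trunc_mat n a \<in> (if k = 0 then carrier_mat n n else {0\<^sub>m n n})" if
      "a \<in> trunc_hom n k" for k a
  proof (cases "k = 0")
    case False
    then have "blockA a = pzero" using that trunc_hom_subset[of n k]
      by (auto simp: D11_hom_iff split: if_splits)
    then show ?thesis using False by (simp add: trunc_mat_eq_0)
  qed (simp add: trunc_mat_def)
  show "trunc_mat n (dQ n a) = 0\<^sub>m n n" if "a \<in> trunc_car n" for a
    using that trunc_car_Dops trunc_mat_dQ by blast
qed

lemma trunc_mat_surj:
  assumes M: "M \<in> carrier_mat n n"
  shows "\<exists>z\<in>dg_cocycles (D11 n) 0. trunc_mat n z = M"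
proof -
  define S where "S = {..<n} \<times> {..<n}"
  define c where "c s = M $$ s / (poly (vanishing_poly n) 0 * fact (snd s))" for s
  define A where "A = (\<lambda>p. \<Sum>s\<in>S. Polynomial.smult (c s) (unit_op n (fst s) (snd s) p))"
  have fin: "finite S" by (simp add: S_def)
  have A: "A \<in> Weyl" unfolding A_def using fin by (rule Weyl_sum) (rule unit_op_Weyl)
  have "monom 1 n dvd A (monom 1 n * q)" for q
    unfolding monom_1_dvd_iff' A_def coeff_sum
  proof (intro allI impI sum.neutral ballI)
    fix k s assume "k < n" "s \<in> S"
    then show "coeff (Polynomial.smult (c s) (unit_op n (fst s) (snd s) (monom 1 n * q))) k = 0"
      using unit_op_ideal[of "snd s" n "fst s" q] by (auto simp: S_def monom_1_dvd_iff')
  qed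
  then obtain D where D: "D \<in> Weyl" "\<And>q. A (monom 1 n * q) = monom 1 n * D q"
    using Weyl_ideal_factor[OF A] by blast
  define z where "z = block A pzero pzero D"
  have zD: "z \<in> Dops" unfolding z_def by (rule block_Dops[OF A Weyl_zero Weyl_zero D(1)])
  have "z \<in> dg_cocycles (D11 n) 0"
    using zD D(2) Weyl_0[OF A] Weyl_0[OF D(1)] by (simp add: D11_cocycle_0_iff z_def)
  moreover have "trunc_mat n z = M"
  proof (rule eq_matI)
    fix r j assume "r < dim_row M" "j < dim_col M"
    then have r: "r < n" and j: "j < n" using M by auto
    have "trunc_mat n z $$ (r, j) = (\<Sum>s\<in>S. c s * coeff (unit_op n (fst s) (snd s) (monom 1 j)) r)"
      using r j Weyl_0[OF D(1)] by (simp add: trunc_mat_def z_def A_def coeff_sum)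
    also have "\<dots> = (\<Sum>s\<in>S. if s = (r, j) then M $$ (r, j) else 0)"
      using r by (intro sum.cong) (auto simp: coeff_unit_op_monom c_def poly_vanishing_poly_0)
    also have "\<dots> = M $$ (r, j)" using fin r j by (simp add: S_def)
    finally show "trunc_mat n z $$ (r, j) = M $$ (r, j)" .
  qed (use M in \<open>simp_all add: trunc_mat_def\<close>)
  ultimately show ?thesis by blast
qed

text \<open>If the matrix vanishes, the even component of the cocycle maps C[x] into (x^n), so it factors
  as x^n C with C in the Weyl algebra; the cocycle is then the coboundary of the odd operator C.\<close>

lemma trunc_mat_kernel:
  assumes z: "z \<in> dg_cocycles (D11 n) 0" and M: "trunc_mat n z = 0\<^sub>m n n"
  shows "z \<in> dQ n ` dg_hom (D11 n) (-1)"
proof -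
  have zD: "z \<in> Dops" and B: "blockB z = pzero" and C: "blockC z = pzero"
    and AD: "\<And>q. blockA z (monom 1 n * q) = monom 1 n * blockD z q"
    using z by (auto simp: D11_cocycle_0_iff)
  have lin: "poly_linear (blockA z)" using zD Dops_block Weyl_poly_linear by blast
  have "monom 1 n dvd blockA z r" for r
    unfolding monom_1_dvd_iff'
  proof (intro allI impI)
    fix k assume k: "k < n"
    have "coeff (blockA z (monom 1 l)) k = 0" if "l < n" for l
      using arg_cong[OF M, of "\<lambda>m. m $$ (k, l)"] k that by (simp add: trunc_mat_def)
    then show "coeff (blockA z r) k = 0"
      using coeff_ideal_preserving[OF lin _ k, of r] AD by simp
  qed
  then obtain C' where C': "C' \<in> Weyl" "\<And>p. blockA z p = monom 1 n * C' p"
    using Weyl_dvd_factor Dops_block[OF zD] by blast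
  define b where "b = block pzero pzero C' pzero"
  have bD: "b \<in> Dops" unfolding b_def by (rule block_Dops[OF Weyl_zero Weyl_zero C'(1) Weyl_zero])
  have b: "b \<in> dg_hom (D11 n) (-1)" using bD Weyl_0[OF C'(1)] by (simp add: D11_hom_iff b_def)
  have "C' (monom 1 n * q) = blockD z q" for q using AD[of q] C'(2) by simp
  then have "dQ n b = block (blockA z) (blockB z) (blockC z) (blockD z)"
    unfolding dQ_block[OF bD] using C'(2) Weyl_0[OF C'(1)] by (simp add: b_def B C fun_eq_iff)
  also have "\<dots> = z" using Dops_eq_block[OF zD] by simp
  finally show ?thesis using b by blast
qed

lemma qiso_trunc_mat: "dga_qiso (trunc_mat n) (trunc_dga n) (gl_dga n)"
  unfolding dga_qiso_def
proof (intro conjI)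
  show "is_dga (trunc_dga n)" by (rule is_dga_trunc_dga)
  show "is_dga (gl_dga n)" by (rule is_dga_gl_dga)
  show "dga_hom (trunc_mat n) (trunc_dga n) (gl_dga n)" by (rule trunc_mat_hom)
  show "\<forall>k. \<forall>z\<in>dg_cocycles (trunc_dga n) k.
      trunc_mat n z \<in> dg_coboundaries (gl_dga n) k \<longrightarrow> z \<in> dg_coboundaries (trunc_dga n) k"
  proof (intro allI ballI impI)
    fix k z assume z: "z \<in> dg_cocycles (trunc_dga n) k" and c: "trunc_mat n z \<in> dg_coboundaries
        (gl_dga n) k"
    have zh: "z \<in> trunc_hom n k" and zd: "dQ n z = op_zero" using z
      by (auto simp: dg_cocycles_def trunc_dga_simps)
    consider "k = 0" | "k = -1" | "k \<notin> {-1, 0}" by blast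
    then show "z \<in> dg_coboundaries (trunc_dga n) k"
    proof cases
      case 1
      have "trunc_mat n z = 0\<^sub>m n n" using c 1 by (auto simp: dg_coboundaries_def gl_dga_simps)
      moreover have "z \<in> dg_cocycles (D11 n) 0" using zh 1 by (simp add: trunc_hom_def)
      ultimately have "z \<in> dQ n ` dg_hom (D11 n) (-1)" by (intro trunc_mat_kernel)
      with 1 show ?thesis by (simp add: dg_coboundaries_def trunc_dga_simps trunc_hom_def)
    next
      case 2
      then have "z \<in> dg_cocycles (D11 n) (-1)" using zh zd
        by (simp add: trunc_hom_def dg_cocycles_def D11_simps)
      then have "z = op_zero" by (rule D11_cocycle_neg1_eq_zero)
      then show ?thesis using trunc_coboundary_zero by simp
    next
      case 3
      have "z = op_zero"
      proof (cases "0 < k")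
        case False
        then have "z \<in> dg_hom (D11 n) k" "k \<notin> {-1, 0, 1}" using zh 3
          by (simp_all add: trunc_hom_def)
        then show ?thesis by (rule D11_hom_eq_zero)
      qed (use zh in \<open>simp add: trunc_hom_def\<close>)
      then show ?thesis using trunc_coboundary_zero by simp
    qed
  qed
  show "\<forall>k. \<forall>w\<in>dg_cocycles (gl_dga n) k. \<exists>z\<in>dg_cocycles (trunc_dga n) k. \<exists>b\<in>dg_hom (gl_dga n) (k
      - 1).
      w = dg_add (gl_dga n) (trunc_mat n z) (dg_d (gl_dga n) b)"
  proof (intro allI ballI)
    fix k w assume w: "w \<in> dg_cocycles (gl_dga n) k"
    have zero: "0\<^sub>m n n \<in> dg_hom (gl_dga n) (k - 1)" by (simp add: gl_dga_simps)
    show "\<exists>z\<in>dg_cocycles (trunc_dga n) k. \<exists>b\<in>dg_hom (gl_dga n) (k - 1).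
        w = dg_add (gl_dga n) (trunc_mat n z) (dg_d (gl_dga n) b)"
    proof (cases "k = 0")
      case True
      then have wc: "w \<in> carrier_mat n n" using w by (simp add: dg_cocycles_def gl_dga_simps)
      then obtain z where z: "z \<in> dg_cocycles (D11 n) 0" "trunc_mat n z = w" using trunc_mat_surj
        by blast
      have "z \<in> dg_cocycles (trunc_dga n) k"
        using z(1) True by (simp add: dg_cocycles_def trunc_dga_simps trunc_hom_def D11_simps)
      moreover have "w = dg_add (gl_dga n) (trunc_mat n z) (dg_d (gl_dga n) (0\<^sub>m n n))"
        using z(2) wc by (simp add: gl_dga_simps)
      ultimately show ?thesis using zero by blast
    next
      case False
      then have "w = 0\<^sub>m n n" using w by (simp add: dg_cocycles_def gl_dga_simps)
      then have "w = dg_add (gl_dga n) (trunc_mat n op_zero) (dg_d (gl_dga n) (0\<^sub>m n n))"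
        by (simp add: gl_dga_simps trunc_mat_eq_0 op_zero_entries)
      then show ?thesis using zero trunc_cocycle_zero by blast
    qed
  qed
qed

theorem lemma3p3:
  fixes n :: nat
  assumes "n \<ge> 1"
  shows "quasi_isomorphic_in TYPE(sop) (D11 n) (gl_dga n)"
  unfolding quasi_isomorphic_in_def
  using qiso_trunc_inclusion[of n] qiso_trunc_mat[of n] by blast

end
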